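(* Let $k\in\{1,2,\dots\}\cup\{\infty\}$. (1) For every $C^k$-atlas $\mathcal{U}$ on $\mathbb{R}$ there exists a chain-like $C^k$-atlas $\mathcal{V}$ on $\mathbb{R}$ which is $C^k$-compatible with $\mathcal{U}$. (2) If $\mathcal{V}$ is a chain-like $C^k$-atlas on $\mathbb{R}$, then there exists a homeomorphism $\omega\colon\mathbb{R}\to\mathbb{R}$ such that the chart $(\mathbb{R},\omega)$ is $C^k$-compatible with $\mathcal{V}$.
   Context: Here $\mathbb{R}$ is regarded as a topological space. A chart on $\mathbb{R}$ is a homeomorphism $\varphi\colon U\to\varphi(U)$ of an open $U\subset\mathbb{R}$ onto an open subset of $\mathbb{R}$; charts $(U,\varphi),(V,\psi)$ are $C^k$-compatible if $U\cap V=\varnothing$ or $\psi\circ\varphi^{-1}\colon\varphi(U\cap V)\to\psi(U\cap V)$ is a $C^k$-diffeomorphism; a $C^k$-atlas is a family of pairwise compatible charts whose domains cover $\mathbb{R}$; a chart or atlas is $C^k$-compatible with an atlas if their union is a (partial) family of pairwise $C^k$-compatible charts. Two charts $(U,\varphi),(V,\psi)$ are $C^k$-joinable if they are $C^k$-compatible and there are reals $a<b<c<d$ with $\varphi(U)=(a,c)$, $\varphi(U\cap V)=\psi(U\cap V)=(b,c)$, $\psi(V)=(b,d)$. A countable $C^k$-atlas $\{(V_i,\psi_i)\}_{i\in\mathbb{Z}}$ on $\mathbb{R}$ is chain-like if for every $i\in\mathbb{Z}$: (G1) $(V_i,\psi_i)$ and $(V_{i+1},\psi_{i+1})$ are $C^k$-joinable,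 and (G2) $V_j\cap V_i\cap V_{i+1}=\varnothing$ for all $j\neq i,i+1$. *)

theory Defs
  imports "HOL-Analysis.Analysis" "HOL-Library.Extended_Nat"
begin

type_synonym chart = "real set \<times> (real \<Rightarrow> real)"

fun Cn_on :: "nat \<Rightarrow> real set \<Rightarrow> (real \<Rightarrow> real) \<Rightarrow> bool" where
  "Cn_on 0 S f = continuous_on S f"
| "Cn_on (Suc n) S f = ((\<forall>x\<in>S. f differentiable (at x)) \<and> Cn_on n S (deriv f))"

definition Ck_on :: "enat \<Rightarrow> real set \<Rightarrow> (real \<Rightarrow> real) \<Rightarrow> bool" where
  "Ck_on k S f \<longleftrightarrow> (\<forall>n::nat. enat n \<le> k \<longrightarrow> Cn_on n S f)"

definition Ck_diffeo :: "enat \<Rightarrow> real set \<Rightarrow> real set \<Rightarrow> (real \<Rightarrow> real) \<Rightarrow> bool" where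
  "Ck_diffeo k A B g \<longleftrightarrow> bij_betw g A B \<and> Ck_on k A g \<and> Ck_on k B (inv_into A g)"

definition is_chart :: "chart \<Rightarrow> bool" where
  "is_chart c \<longleftrightarrow> (case c of (U, \<phi>) \<Rightarrow>
     open U \<and> open (\<phi> ` U) \<and> (\<exists>\<psi>. homeomorphism U (\<phi> ` U) \<phi> \<psi>))"

definition Ck_compatible :: "enat \<Rightarrow> chart \<Rightarrow> chart \<Rightarrow> bool" where
  "Ck_compatible k c d \<longleftrightarrow> (case c of (U, \<phi>) \<Rightarrow> case d of (V, \<psi>) \<Rightarrow>
     U \<inter> V = {} \<or>
     Ck_diffeo k (\<phi> ` (U \<inter> V)) (\<psi> ` (U \<inter> V)) (\<psi> \<circ> inv_into U \<phi>))"

definition Ck_compatible_family :: "enat \<Rightarrow> chart set \<Rightarrow> bool" where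
  "Ck_compatible_family k A \<longleftrightarrow>
     (\<forall>c\<in>A. is_chart c) \<and> (\<forall>c\<in>A. \<forall>d\<in>A. Ck_compatible k c d)"

definition Ck_atlas :: "enat \<Rightarrow> chart set \<Rightarrow> bool" where
  "Ck_atlas k A \<longleftrightarrow> Ck_compatible_family k A \<and> (\<Union>(fst ` A) = UNIV)"

definition Ck_compatible_with :: "enat \<Rightarrow> chart set \<Rightarrow> chart set \<Rightarrow> bool" where
  "Ck_compatible_with k B A \<longleftrightarrow> Ck_compatible_family k (A \<union> B)"

definition Ck_joinable :: "enat \<Rightarrow> chart \<Rightarrow> chart \<Rightarrow> bool" where
  "Ck_joinable k c d \<longleftrightarrow> Ck_compatible k c d \<and> (case c of (U, \<phi>) \<Rightarrow> case d of (V, \<psi>) \<Rightarrow>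
     (\<exists>a b c' e::real. a < b \<and> b < c' \<and> c' < e \<and>
        \<phi> ` U = {a<..<c'} \<and> \<phi> ` (U \<inter> V) = {b<..<c'} \<and>
        \<psi> ` (U \<inter> V) = {b<..<c'} \<and> \<psi> ` V = {b<..<e}))"

definition chain_like :: "enat \<Rightarrow> (int \<Rightarrow> chart) \<Rightarrow> bool" where
  "chain_like k V \<longleftrightarrow> Ck_atlas k (range V) \<and>
     (\<forall>i. Ck_joinable k (V i) (V (i + 1))) \<and>
     (\<forall>i j. j \<noteq> i \<and> j \<noteq> i + 1 \<longrightarrow> fst (V j) \<inter> fst (V i) \<inter> fst (V (i + 1)) = {})"

end

theory Submission
  imports Defs "HOL-Computational_Algebra.Polynomial"
begin

lemma has_real_derivative_deriv:
  "(f::real \<Rightarrow> real) differentiable (at x) \<Longrightarrow> (f has_real_derivative deriv f x) (at x)"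
  using DERIV_deriv_iff_real_differentiable by blast

lemma Cn_on_subset: "Cn_on n S f \<Longrightarrow> T \<subseteq> S \<Longrightarrow> Cn_on n T f"
  by (induction n arbitrary: f) (auto intro: continuous_on_subset)

lemma Cn_on_empty: "Cn_on n {} f"
  by (induction n arbitrary: f) auto

lemma Cn_on_SucD: "Cn_on (Suc n) S f \<Longrightarrow> Cn_on n S f"
proof (induction n arbitrary: f)
  case 0
  then have "\<forall>x\<in>S. isCont f x" by (simp add: differentiable_imp_continuous_within)
  then show ?case by (simp add: continuous_at_imp_continuous_on)
qed simp

lemma Cn_on_le: "Cn_on n S f \<Longrightarrow> m \<le> n \<Longrightarrow> Cn_on m S f"
  by (induction n) (auto simp: le_Suc_eq simp del: Cn_on.simps(2) dest: Cn_on_SucD)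

lemma Cn_on_continuous: "Cn_on n S f \<Longrightarrow> continuous_on S f"
  using Cn_on_le[of n S f 0] by simp

lemma Cn_on_cong:
  assumes "open S" "\<And>x. x \<in> S \<Longrightarrow> f x = g x" "Cn_on n S f"
  shows "Cn_on n S g"
  using assms(2,3)
proof (induction n arbitrary: f g)
  case 0
  then show ?case using continuous_on_cong[of S S f g] by simp
next
  case (Suc n)
  have "g differentiable (at x)" if x: "x \<in> S" for x
  proof -
    obtain f' where "(f has_derivative f') (at x)"
      using Suc.prems(2) x unfolding Cn_on.simps differentiable_def by blast
    then have "(g has_derivative f') (at x)"
      by (rule has_derivative_transform_within_open[OF _ assms(1) x Suc.prems(1)])
    then show ?thesis unfolding differentiable_def by blast
  qed
  moreover have "Cn_on n S (deriv g)"
  proof (rule Suc.IH)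
    fix x assume x: "x \<in> S"
    have "eventually (\<lambda>y. f y = g y) (nhds x)"
      unfolding eventually_nhds using assms(1) x Suc.prems(1) by blast
    then show "deriv f x = deriv g x" by (rule deriv_cong_ev) simp
  qed (use Suc.prems(2) in simp)
  ultimately show ?case by simp
qed

lemma Cn_on_local:
  assumes "open S" "\<And>x. x \<in> S \<Longrightarrow> \<exists>T. open T \<and> x \<in> T \<and> T \<subseteq> S \<and> Cn_on n T f"
  shows "Cn_on n S f"
  using assms(2)
proof (induction n arbitrary: f)
  case 0
  have "isCont f x" if x: "x \<in> S" for x
  proof -
    obtain T where "open T" "x \<in> T" "continuous_on T f"
      using 0[OF x] by auto
    then show ?thesis using continuous_on_eq_continuous_at by blast
  qed
  then show ?case by (simp add: continuous_at_imp_continuous_on)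
next
  case (Suc n)
  have local: "\<exists>T. open T \<and> x \<in> T \<and> T \<subseteq> S \<and> (\<forall>y\<in>T. f differentiable (at y)) \<and>
      Cn_on n T (deriv f)" if "x \<in> S" for x
    using Suc.prems[OF that] unfolding Cn_on.simps by blast
  have "Cn_on n S (deriv f)"
    by (rule Suc.IH) (use local in blast)
  moreover have "\<forall>x\<in>S. f differentiable (at x)"
    using local by blast
  ultimately show ?case by simp
qed

lemma Cn_on_SucI:
  assumes "open S" "\<And>x. x \<in> S \<Longrightarrow> (f has_real_derivative f' x) (at x)" "Cn_on n S f'"
  shows "Cn_on (Suc n) S f"
proof -
  have "Cn_on n S (deriv f)"
    by (rule Cn_on_cong[OF assms(1) _ assms(3)]) (use DERIV_imp_deriv[OF assms(2)] in simp)
  then show ?thesis using assms(2) real_differentiable_def by auto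
qed

lemma Cn_on_const: "Cn_on n S (\<lambda>x. c)"
  by (induction n arbitrary: c) (auto simp: deriv_const)

lemma Cn_on_id: "Cn_on n S (\<lambda>x::real. x)"
proof -
  have "deriv (\<lambda>x. x) = (\<lambda>x. 1::real)" by (rule ext) (simp add: DERIV_imp_deriv)
  then show ?thesis by (cases n) (auto simp: Cn_on_const)
qed

lemma Cn_on_add:
  "open S \<Longrightarrow> Cn_on n S f \<Longrightarrow> Cn_on n S g \<Longrightarrow> Cn_on n S (\<lambda>x. f x + g x)"
proof (induction n arbitrary: f g)
  case (Suc n)
  then show ?case
    by (intro Cn_on_SucI[where f' = "\<lambda>x. deriv f x + deriv g x"])
       (auto intro!: DERIV_add has_real_derivative_deriv)
qed (auto intro: continuous_on_add)

lemma Cn_on_mult: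
  "open S \<Longrightarrow> Cn_on n S f \<Longrightarrow> Cn_on n S g \<Longrightarrow> Cn_on n S (\<lambda>x. f x * g x)"
proof (induction n arbitrary: f g)
  case (Suc n)
  then have "Cn_on n S (\<lambda>x. deriv f x * g x + deriv g x * f x)"
    using Cn_on_SucD[OF Suc.prems(2)] Cn_on_SucD[OF Suc.prems(3)] by (auto intro!: Cn_on_add Suc.IH)
  with Suc.prems show ?case
    by (intro Cn_on_SucI) (auto intro!: DERIV_mult has_real_derivative_deriv)
qed (auto intro: continuous_on_mult)

lemma Cn_on_inverse:
  "open S \<Longrightarrow> Cn_on n S f \<Longrightarrow> (\<And>x. x \<in> S \<Longrightarrow> f x \<noteq> 0) \<Longrightarrow> Cn_on n S (\<lambda>x. inverse (f x))"
proof (induction n arbitrary: f)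
  case (Suc n)
  have "Cn_on n S (\<lambda>x. inverse (f x))"
    by (rule Suc.IH[OF Suc.prems(1) Cn_on_SucD[OF Suc.prems(2)] Suc.prems(3)])
  then have "Cn_on n S (\<lambda>x. -1 * (inverse (f x) * deriv f x * inverse (f x)))"
    using Suc.prems(1,2) by (intro Cn_on_mult Cn_on_const) auto
  with Suc.prems show ?case
    by (intro Cn_on_SucI) (auto intro!: DERIV_inverse'[THEN DERIV_cong] has_real_derivative_deriv)
qed (auto intro: continuous_on_inverse)

lemma Cn_on_compose:
  "open S \<Longrightarrow> open T \<Longrightarrow> g ` S \<subseteq> T \<Longrightarrow> Cn_on n T f \<Longrightarrow> Cn_on n S g \<Longrightarrow>
    Cn_on n S (\<lambda>x. f (g x))"
proof (induction n arbitrary: f g)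
  case (Suc n)
  have "Cn_on n S (\<lambda>x. deriv f (g x))"
    by (rule Suc.IH[OF Suc.prems(1-3)]) (use Suc.prems(4) Cn_on_SucD[OF Suc.prems(5)] in simp_all)
  moreover have "Cn_on n S (deriv g)" using Suc.prems(5) by simp
  ultimately have "Cn_on n S (\<lambda>x. deriv f (g x) * deriv g x)"
    by (rule Cn_on_mult[OF Suc.prems(1)])
  moreover have "((\<lambda>x. f (g x)) has_real_derivative deriv f (g x) * deriv g x) (at x)"
    if "x \<in> S" for x
    using that Suc.prems(3-5) by (intro DERIV_chain2 has_real_derivative_deriv) auto
  ultimately show ?case by (rule Cn_on_SucI[OF Suc.prems(1), rotated])
qed (auto intro: continuous_on_compose2)

lemma Cn_on_inv_into:
  assumes S: "open S" and inj: "inj_on f S" and f: "Cn_on n S f"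
    and f': "\<And>x. x \<in> S \<Longrightarrow> f differentiable (at x) \<and> deriv f x \<noteq> 0"
  shows "Cn_on n (f ` S) (inv_into S f)"
  using f
proof (induction n)
  let ?g = "inv_into S f"
  have cont: "continuous_on S f" using f by (rule Cn_on_continuous)
  have cont_inv: "continuous_on (f ` S) ?g"
    by (rule continuous_on_inverse_open[OF S cont]) (use inj in auto)
  have open_img: "open (f ` S)" by (rule invariance_of_domain[OF cont S inj])
  {
    case 0
    then show ?case using cont_inv by simp
  next
    case (Suc n)
    have "(?g has_real_derivative inverse (deriv f (?g y))) (at y)" if y: "y \<in> f ` S" for y
    proof (rule has_field_derivative_inverse_basic[OF _ _ _ open_img y])
      have gy: "?g y \<in> S" using y by (rule inv_into_into)
      show "(f has_real_derivative deriv f (?g y)) (at (?g y))" "deriv f (?g y) \<noteq> 0"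
        using f'[OF gy] has_real_derivative_deriv by auto
      show "continuous (at y) ?g"
        using cont_inv open_img y continuous_on_eq_continuous_at by blast
    qed (rule f_inv_into_f)
    moreover have "Cn_on n (f ` S) (\<lambda>y. inverse (deriv f (?g y)))"
    proof (rule Cn_on_inverse[OF open_img])
      show "Cn_on n (f ` S) (\<lambda>y. deriv f (?g y))"
        by (rule Cn_on_compose[OF open_img S _ _ Suc.IH[OF Cn_on_SucD[OF Suc.prems]]])
           (use Suc.prems in \<open>simp_all add: image_subset_iff inv_into_into\<close>)
      show "deriv f (?g y) \<noteq> 0" if "y \<in> f ` S" for y
        using f' inv_into_into[OF that] by blast
    qed
    ultimately show ?case by (rule Cn_on_SucI[OF open_img])
  }
qed

lemma Ck_onI: "(\<And>n. enat n \<le> k \<Longrightarrow> Cn_on n S f) \<Longrightarrow> Ck_on k S f"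
  unfolding Ck_on_def by blast

lemma Ck_onD: "Ck_on k S f \<Longrightarrow> enat n \<le> k \<Longrightarrow> Cn_on n S f"
  unfolding Ck_on_def by blast

lemma Ck_on_subset: "Ck_on k S f \<Longrightarrow> T \<subseteq> S \<Longrightarrow> Ck_on k T f"
  by (rule Ck_onI, rule Cn_on_subset[OF Ck_onD])

lemma Ck_on_cong: "open S \<Longrightarrow> (\<And>x. x \<in> S \<Longrightarrow> f x = g x) \<Longrightarrow> Ck_on k S f \<Longrightarrow> Ck_on k S g"
  by (rule Ck_onI, rule Cn_on_cong[OF _ _ Ck_onD])

lemma Ck_on_local:
  "open S \<Longrightarrow> (\<And>x. x \<in> S \<Longrightarrow> \<exists>T. open T \<and> x \<in> T \<and> T \<subseteq> S \<and> Ck_on k T f) \<Longrightarrow> Ck_on k S f"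
  by (rule Ck_onI, rule Cn_on_local) (blast dest: Ck_onD)+

lemma Ck_on_const: "Ck_on k S (\<lambda>x. c)"
  by (rule Ck_onI, rule Cn_on_const)

lemma Ck_on_id: "Ck_on k S (\<lambda>x::real. x)"
  by (rule Ck_onI, rule Cn_on_id)

lemma Ck_on_add: "open S \<Longrightarrow> Ck_on k S f \<Longrightarrow> Ck_on k S g \<Longrightarrow> Ck_on k S (\<lambda>x. f x + g x)"
  by (rule Ck_onI, rule Cn_on_add[OF _ Ck_onD Ck_onD])

lemma Ck_on_mult: "open S \<Longrightarrow> Ck_on k S f \<Longrightarrow> Ck_on k S g \<Longrightarrow> Ck_on k S (\<lambda>x. f x * g x)"
  by (rule Ck_onI, rule Cn_on_mult[OF _ Ck_onD Ck_onD])

lemma Ck_on_diff: "open S \<Longrightarrow> Ck_on k S f \<Longrightarrow> Ck_on k S g \<Longrightarrow> Ck_on k S (\<lambda>x. f x - g x)"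
proof -
  assume "open S" "Ck_on k S f" "Ck_on k S g"
  then have "Ck_on k S (\<lambda>x. f x + -1 * g x)" by (intro Ck_on_add Ck_on_mult Ck_on_const)
  then show ?thesis by simp
qed

lemma Ck_on_compose:
  "open S \<Longrightarrow> open T \<Longrightarrow> g ` S \<subseteq> T \<Longrightarrow> Ck_on k T f \<Longrightarrow> Ck_on k S g \<Longrightarrow>
    Ck_on k S (\<lambda>x. f (g x))"
  by (rule Ck_onI, rule Cn_on_compose[OF _ _ _ Ck_onD Ck_onD])

lemma Ck_on_inv_into:
  "open S \<Longrightarrow> inj_on f S \<Longrightarrow> Ck_on k S f \<Longrightarrow>
    (\<And>x. x \<in> S \<Longrightarrow> f differentiable (at x) \<and> deriv f x \<noteq> 0) \<Longrightarrow>
    Ck_on k (f ` S) (inv_into S f)"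
  by (rule Ck_onI, rule Cn_on_inv_into[OF _ _ Ck_onD])

lemma Ck_on_continuous: "Ck_on k S f \<Longrightarrow> continuous_on S f"
  using Ck_onD[of k S f 0] Cn_on_continuous by (simp add: zero_enat_def[symmetric])

lemma Ck_on_differentiable: "Ck_on k S f \<Longrightarrow> k \<ge> 1 \<Longrightarrow> x \<in> S \<Longrightarrow> f differentiable (at x)"
  using Ck_onD[of k S f 1] by (auto simp: one_enat_def)

definition Ck_local_diffeo :: "enat \<Rightarrow> real set \<Rightarrow> (real \<Rightarrow> real) \<Rightarrow> bool" where
  "Ck_local_diffeo k S f \<longleftrightarrow>
     open S \<and> Ck_on k S f \<and> (\<forall>x\<in>S. f differentiable (at x) \<and> deriv f x \<noteq> 0)"

lemma Ck_local_diffeo_empty: "Ck_local_diffeo k {} f"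
  unfolding Ck_local_diffeo_def Ck_on_def by (simp add: Cn_on_empty)

lemma Ck_local_diffeo_subset:
  "Ck_local_diffeo k S f \<Longrightarrow> open T \<Longrightarrow> T \<subseteq> S \<Longrightarrow> Ck_local_diffeo k T f"
  unfolding Ck_local_diffeo_def by (meson Ck_on_subset subsetD)

lemma Ck_local_diffeo_continuous: "Ck_local_diffeo k S f \<Longrightarrow> continuous_on S f"
  unfolding Ck_local_diffeo_def by (blast intro: Ck_on_continuous)

lemma Ck_local_diffeo_local:
  assumes "open S" "\<And>x. x \<in> S \<Longrightarrow> \<exists>T. open T \<and> x \<in> T \<and> T \<subseteq> S \<and> Ck_local_diffeo k T f"
  shows "Ck_local_diffeo k S f"
proof -
  have "\<exists>T. open T \<and> x \<in> T \<and> T \<subseteq> S \<and> Ck_on k T f \<and> f differentiable (at x) \<and> deriv f x \<noteq> 0"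
    if x: "x \<in> S" for x
  proof -
    obtain T where "open T" "x \<in> T" "T \<subseteq> S" "Ck_local_diffeo k T f" using assms(2)[OF x] by blast
    then show ?thesis unfolding Ck_local_diffeo_def by blast
  qed
  then show ?thesis
    using Ck_on_local[OF assms(1), of k f] assms(1) unfolding Ck_local_diffeo_def by blast
qed

lemma Ck_local_diffeo_cong:
  assumes "open S" "\<And>x. x \<in> S \<Longrightarrow> f x = g x" "Ck_local_diffeo k S f"
  shows "Ck_local_diffeo k S g"
  unfolding Ck_local_diffeo_def
proof (intro conjI ballI)
  show "Ck_on k S g" using assms Ck_on_cong unfolding Ck_local_diffeo_def by blast
  fix x assume x: "x \<in> S"
  have ev: "eventually (\<lambda>y. f y = g y) (nhds x)"
    unfolding eventually_nhds using assms(1,2) x by blast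
  obtain f' where "(f has_derivative f') (at x)"
    using assms(3) x unfolding Ck_local_diffeo_def differentiable_def by blast
  then have "(g has_derivative f') (at x)"
    by (rule has_derivative_transform_within_open[OF _ assms(1) x assms(2)])
  then show "g differentiable (at x)" unfolding differentiable_def by blast
  have "deriv f x = deriv g x" using ev by (rule deriv_cong_ev) simp
  then show "deriv g x \<noteq> 0" using assms(3) x unfolding Ck_local_diffeo_def by metis
qed (rule assms(1))

lemma Ck_local_diffeo_compose:
  assumes f: "Ck_local_diffeo k T f" and g: "Ck_local_diffeo k S g" and "g ` S \<subseteq> T"
  shows "Ck_local_diffeo k S (\<lambda>x. f (g x))"
proof -
  have "(\<lambda>x. f (g x)) differentiable (at x) \<and> deriv (\<lambda>x. f (g x)) x \<noteq> 0" if x: "x \<in> S" for x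
  proof -
    have "g x \<in> T" using assms(3) x by auto
    then have df: "f differentiable (at (g x))" "deriv f (g x) \<noteq> 0" and
      dg: "g differentiable (at x)" "deriv g x \<noteq> 0"
      using f g x by (auto simp: Ck_local_diffeo_def)
    show ?thesis
      using differentiable_chain_at[OF dg(1) df(1)] real_derivative_chain[OF dg(1) df(1)] df(2) dg(2)
      by (simp add: o_def)
  qed
  then show ?thesis
    using assms Ck_on_compose unfolding Ck_local_diffeo_def by blast
qed

lemma Ck_local_diffeo_inv_into:
  assumes f: "Ck_local_diffeo k S f" and inj: "inj_on f S"
  shows "Ck_local_diffeo k (f ` S) (inv_into S f)"
proof -
  let ?g = "inv_into S f"
  have S: "open S" and C: "Ck_on k S f"
    and f': "\<And>x. x \<in> S \<Longrightarrow> f differentiable (at x) \<and> deriv f x \<noteq> 0"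
    using f by (auto simp: Ck_local_diffeo_def)
  have cont: "continuous_on S f" by (rule Ck_on_continuous[OF C])
  have cont_inv: "continuous_on (f ` S) ?g"
    by (rule continuous_on_inverse_open[OF S cont]) (use inj in auto)
  have open_img: "open (f ` S)" by (rule invariance_of_domain[OF cont S inj])
  have der: "(?g has_real_derivative inverse (deriv f (?g y))) (at y)" if y: "y \<in> f ` S" for y
  proof (rule has_field_derivative_inverse_basic[OF _ _ _ open_img y])
    have gy: "?g y \<in> S" using y by (rule inv_into_into)
    show "(f has_real_derivative deriv f (?g y)) (at (?g y))" "deriv f (?g y) \<noteq> 0"
      using f'[OF gy] has_real_derivative_deriv by auto
    show "continuous (at y) ?g"
      using cont_inv open_img y continuous_on_eq_continuous_at by blast
  qed (rule f_inv_into_f)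
  have "?g differentiable (at y) \<and> deriv ?g y \<noteq> 0" if y: "y \<in> f ` S" for y
    using der[OF y] DERIV_imp_deriv[OF der[OF y]] f'[OF inv_into_into[OF y]]
    by (auto simp: real_differentiable_def)
  then show ?thesis
    using Ck_on_inv_into[OF S inj C f'] open_img by (simp add: Ck_local_diffeo_def)
qed

lemma Ck_on_affine: "open S \<Longrightarrow> Ck_on k S (\<lambda>x. a * x + b)"
  by (intro Ck_on_add Ck_on_mult Ck_on_const Ck_on_id)

lemma Ck_local_diffeo_affine:
  assumes "open S" "a \<noteq> 0"
  shows "Ck_local_diffeo k S (\<lambda>x. a * x + b)"
proof -
  have D: "((\<lambda>x. a * x + b) has_real_derivative a) (at x)" for x
    by (auto intro!: derivative_eq_intros)
  have "(\<lambda>x. a * x + b) differentiable (at x)" for x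
    using D real_differentiable_def by blast
  then show ?thesis
    unfolding Ck_local_diffeo_def using assms Ck_on_affine DERIV_imp_deriv[OF D] by auto
qed

lemma Ck_local_diffeo_imp_Ck_diffeo:
  assumes "Ck_local_diffeo k S f" "inj_on f S"
  shows "Ck_diffeo k S (f ` S) f"
  using assms Ck_local_diffeo_inv_into[OF assms]
  by (auto simp: Ck_diffeo_def Ck_local_diffeo_def inj_on_imp_bij_betw)

lemma Ck_diffeo_imp_Ck_local_diffeo:
  assumes "Ck_diffeo k S T f" "open S" "k \<ge> 1"
  shows "Ck_local_diffeo k S f"
  unfolding Ck_local_diffeo_def
proof (intro conjI ballI)
  have bij: "bij_betw f S T" and C: "Ck_on k S f" and C': "Ck_on k T (inv_into S f)"
    using assms(1) by (auto simp: Ck_diffeo_def)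
  show "Ck_on k S f" by (rule C)
  fix x assume x: "x \<in> S"
  show df: "f differentiable (at x)" by (rule Ck_on_differentiable[OF C assms(3) x])
  have "f x \<in> T" using bij x bij_betwE by blast
  then have dg: "inv_into S f differentiable (at (f x))"
    by (rule Ck_on_differentiable[OF C' assms(3)])
  have "eventually (\<lambda>y. (inv_into S f \<circ> f) y = y) (nhds x)"
    unfolding eventually_nhds using assms(2) x bij by (auto simp: bij_betw_def)
  then have "deriv (inv_into S f \<circ> f) x = deriv (\<lambda>y. y) x" by (rule deriv_cong_ev) simp
  then have "deriv (inv_into S f) (f x) * deriv f x = 1"
    using real_derivative_chain[OF df dg] by (simp add: DERIV_imp_deriv)
  then show "deriv f x \<noteq> 0" by auto
qed (rule assms(2))

lemma deriv_pos_if_strict_mono_on: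
  fixes t :: "real \<Rightarrow> real"
  assumes "strict_mono_on S t" "open S" "y \<in> S" "t differentiable (at y)" "deriv t y \<noteq> 0"
  shows "deriv t y > 0"
proof (rule ccontr)
  assume "\<not> deriv t y > 0"
  then have "deriv t y < 0" using assms(5) by simp
  then obtain d where d: "d > 0" "\<And>h. h > 0 \<Longrightarrow> h < d \<Longrightarrow> t y > t (y + h)"
    using DERIV_neg_dec_right[OF has_real_derivative_deriv[OF assms(4)]] by blast
  obtain e where e: "e > 0" "ball y e \<subseteq> S" using assms(2,3) open_contains_ball by blast
  define h where "h = min d e / 2"
  have "h > 0" "h < d" "y + h \<in> S"
    using d(1) e by (auto simp: h_def dist_real_def intro!: subsetD[OF e(2)])
  then show False using d(2) assms(1,3) by (auto simp: strict_mono_on_def) (meson less_add_same_cancel1 less_asym)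
qed

definition flat :: "real poly \<Rightarrow> real \<Rightarrow> real" where
  "flat p x = (if 0 < x then poly p (inverse x) * exp (- inverse x) else 0)"

text \<open>For \<open>x > 0\<close>, the derivative of \<open>p(1/x) e^(-1/x)\<close> is \<open>x\<^sup>-\<^sup>2 (p - p')(1/x) e^(-1/x)\<close>.\<close>
definition flat_deriv_poly :: "real poly \<Rightarrow> real poly" where
  "flat_deriv_poly p = [:0, 0, 1:] * (p - pderiv p)"

lemma poly_div_exp_tendsto_0: "((\<lambda>u. poly p u / exp u) \<longlongrightarrow> (0::real)) at_top"
proof -
  have "((\<lambda>u. \<Sum>i\<le>degree p. coeff p i * (u ^ i / exp u)) \<longlongrightarrow> (\<Sum>i\<le>degree p. coeff p i * 0)) at_top"
    by (intro tendsto_sum tendsto_mult tendsto_const tendsto_power_div_exp_0)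
  then show ?thesis by (simp add: poly_altdef sum_divide_distrib)
qed

lemma flat_has_derivative_pos:
  assumes x: "0 < x"
  shows "(flat p has_real_derivative flat (flat_deriv_poly p) x) (at x)"
proof -
  have d1: "((\<lambda>y. poly p (inverse y)) has_real_derivative
      poly (pderiv p) (inverse x) * (- (inverse x ^ Suc (Suc 0)))) (at x)"
    by (rule DERIV_chain2[OF poly_DERIV DERIV_inverse]) (use x in auto)
  have d2: "((\<lambda>y. exp (- inverse y)) has_real_derivative
      exp (- inverse x) * (- (- (inverse x ^ Suc (Suc 0))))) (at x)"
    by (rule DERIV_chain2[OF DERIV_exp DERIV_minus[OF DERIV_inverse]]) (use x in auto)
  have "((\<lambda>y. poly p (inverse y) * exp (- inverse y)) has_real_derivative flat (flat_deriv_poly p) x) (at x)"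
    by (rule DERIV_cong[OF DERIV_mult[OF d1 d2]])
       (use x in \<open>simp add: flat_def flat_deriv_poly_def poly_mult algebra_simps power2_eq_square\<close>)
  then show ?thesis
    by (rule has_field_derivative_transform_within_open[where S = "{0<..}"])
       (use x in \<open>auto simp: flat_def\<close>)
qed

lemma flat_has_derivative_neg:
  assumes x: "x < 0"
  shows "(flat p has_real_derivative flat (flat_deriv_poly p) x) (at x)"
proof -
  have "((\<lambda>y. 0) has_real_derivative 0) (at x)" by simp
  then have "(flat p has_real_derivative 0) (at x)"
    by (rule has_field_derivative_transform_within_open[where S = "{..<0}"])
       (use x in \<open>auto simp: flat_def\<close>)
  then show ?thesis using x by (simp add: flat_def)
qed

lemma flat_has_derivative_0: "(flat p has_real_derivative flat (flat_deriv_poly p) 0) (at 0)"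
proof -
  have "((\<lambda>y. poly (pCons 0 p) (inverse y) / exp (inverse y)) \<longlongrightarrow> 0) (at_right (0::real))"
    by (rule filterlim_compose[OF poly_div_exp_tendsto_0 filterlim_inverse_at_top_right])
  moreover have "eventually (\<lambda>y. poly (pCons 0 p) (inverse y) / exp (inverse y) =
      (flat p y - flat p 0) / (y - 0)) (at_right (0::real))"
    unfolding eventually_at_right_field
    by (intro exI[of _ 1]) (auto simp: flat_def exp_minus field_simps)
  ultimately have "((\<lambda>y. (flat p y - flat p 0) / (y - 0)) \<longlongrightarrow> 0) (at_right 0)"
    by (rule Lim_transform_eventually)
  moreover have "eventually (\<lambda>y. 0 = (flat p y - flat p 0) / (y - 0)) (at_left (0::real))"
    unfolding eventually_at_left_field by (intro exI[of _ "-1"]) (auto simp: flat_def)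
  then have "((\<lambda>y. (flat p y - flat p 0) / (y - 0)) \<longlongrightarrow> 0) (at_left 0)"
    by (rule Lim_transform_eventually[rotated]) simp
  ultimately have "(flat p has_real_derivative 0) (at 0)"
    unfolding has_field_derivative_iff by (simp add: filterlim_split_at)
  then show ?thesis by (simp add: flat_def)
qed

lemma flat_has_derivative: "(flat p has_real_derivative flat (flat_deriv_poly p) x) (at x)"
  using flat_has_derivative_pos flat_has_derivative_neg flat_has_derivative_0
  by (cases "0 < x"; cases "x < 0") auto

lemma Cn_on_flat: "Cn_on n S (flat p)"
proof (induction n arbitrary: p)
  case 0
  show ?case
    by (simp add: continuous_at_imp_continuous_on DERIV_isCont[OF flat_has_derivative])
next
  case (Suc n)
  have "deriv (flat p) = flat (flat_deriv_poly p)"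
    by (rule ext, rule DERIV_imp_deriv[OF flat_has_derivative])
  then show ?case using Suc flat_has_derivative real_differentiable_def by auto
qed

lemma flat_nonneg: "flat [:1:] x \<ge> 0" and flat_pos: "x > 0 \<Longrightarrow> flat [:1:] x > 0"
  and flat_deriv_nonneg: "flat (flat_deriv_poly [:1:]) x \<ge> 0"
  by (simp_all add: flat_def flat_deriv_poly_def)

definition smooth_step :: "real \<Rightarrow> real" where
  "smooth_step x = flat [:1:] x / (flat [:1:] x + flat [:1:] (1 - x))"

lemma smooth_step_denominator_pos: "flat [:1:] x + flat [:1:] (1 - x) > 0"
  using flat_pos[of x] flat_pos[of "1 - x"] flat_nonneg[of x] flat_nonneg[of "1 - x"]
  by (cases "x > 0") auto

lemma Ck_on_smooth_step: "Ck_on k S smooth_step"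
proof (rule Ck_onI)
  fix n
  let ?h = "flat [:1:]"
  have "Cn_on n UNIV (\<lambda>x. ?h (1 + (-1) * x))"
    by (rule Cn_on_compose[OF open_UNIV open_UNIV _ Cn_on_flat
          Cn_on_add[OF open_UNIV Cn_on_const Cn_on_mult[OF open_UNIV Cn_on_const Cn_on_id]]]) simp
  moreover have "?h x + ?h (1 + (-1) * x) \<noteq> 0" for x
    using smooth_step_denominator_pos[of x] by simp
  ultimately have "Cn_on n UNIV (\<lambda>x. ?h x * inverse (?h x + ?h (1 + (-1) * x)))"
    by (intro Cn_on_mult Cn_on_inverse Cn_on_add Cn_on_flat) auto
  then have "Cn_on n UNIV smooth_step"
    by (rule Cn_on_cong[OF open_UNIV, rotated]) (simp add: smooth_step_def divide_inverse)
  then show "Cn_on n S smooth_step" by (rule Cn_on_subset) simp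
qed

lemma smooth_step_eq_0: "x \<le> 0 \<Longrightarrow> smooth_step x = 0"
  by (simp add: smooth_step_def flat_def)

lemma smooth_step_eq_1: "x \<ge> 1 \<Longrightarrow> smooth_step x = 1"
  using smooth_step_denominator_pos[of x] by (simp add: smooth_step_def flat_def)

lemma smooth_step_bounds: "0 \<le> smooth_step x" "smooth_step x \<le> 1"
  using smooth_step_denominator_pos[of x] flat_nonneg[of x] flat_nonneg[of "1 - x"]
  by (auto simp: smooth_step_def divide_le_eq_1)

lemma smooth_step_differentiable: "smooth_step differentiable (at x)"
  using Ck_onD[OF Ck_on_smooth_step[of 1 UNIV], of 1] by (simp add: one_enat_def)

lemma deriv_smooth_step_nonneg: "deriv smooth_step x \<ge> 0"
proof -
  let ?h = "flat [:1:]" and ?h' = "flat (flat_deriv_poly [:1:])"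
  have d1: "(?h has_real_derivative ?h' x) (at x)" by (rule flat_has_derivative)
  have d2: "((\<lambda>x. ?h (1 - x)) has_real_derivative - ?h' (1 - x)) (at x)"
    using DERIV_chain2[OF flat_has_derivative, of "\<lambda>x. 1 - x" "-1" x]
    by (simp add: DERIV_diff[OF DERIV_const DERIV_ident, of 1 x, simplified])
  let ?N = "?h' x * (?h x + ?h (1 - x)) - ?h x * (?h' x + - ?h' (1 - x))"
  have "(smooth_step has_real_derivative ?N / ((?h x + ?h (1 - x)) * (?h x + ?h (1 - x)))) (at x)"
    unfolding smooth_step_def[abs_def]
    by (rule DERIV_divide[OF d1 DERIV_add[OF d1 d2]]) (use smooth_step_denominator_pos[of x] in auto)
  moreover have "?N = ?h' x * ?h (1 - x) + ?h x * ?h' (1 - x)" by (simp add: algebra_simps)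
  then have "?N \<ge> 0" using flat_deriv_nonneg flat_nonneg by simp
  ultimately show ?thesis by (simp add: DERIV_imp_deriv)
qed

lemma deriv_smooth_step_eq_0:
  assumes "x < 0 \<or> x > 1"
  shows "deriv smooth_step x = 0"
proof -
  have "(smooth_step has_real_derivative 0) (at x)"
    using assms
  proof
    assume "x < 0"
    then show ?thesis
      by (intro has_field_derivative_transform_within_open[OF DERIV_const, where S = "{..<0}"])
         (auto simp: smooth_step_eq_0)
  next
    assume "x > 1"
    then show ?thesis
      by (intro has_field_derivative_transform_within_open[OF DERIV_const, where S = "{1<..}"])
         (auto simp: smooth_step_eq_1)
  qed
  then show ?thesis by (rule DERIV_imp_deriv)
qed

definition ramp :: "real \<Rightarrow> real \<Rightarrow> real \<Rightarrow> real" where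
  "ramp a b x = smooth_step ((x - a) / (b - a))"

lemma ramp_eq_0: "a < b \<Longrightarrow> x \<le> a \<Longrightarrow> ramp a b x = 0"
  by (simp add: ramp_def smooth_step_eq_0 divide_nonpos_pos)

lemma ramp_eq_1: "a < b \<Longrightarrow> b \<le> x \<Longrightarrow> ramp a b x = 1"
  by (simp add: ramp_def smooth_step_eq_1)

lemma ramp_bounds: "0 \<le> ramp a b x" "ramp a b x \<le> 1"
  by (simp_all add: ramp_def smooth_step_bounds)

lemma Ck_on_ramp: "Ck_on k S (ramp a b)"
proof -
  have "Ck_on k UNIV (\<lambda>x. smooth_step (inverse (b - a) * x + - (a / (b - a))))"
    by (rule Ck_on_compose[OF open_UNIV open_UNIV _ Ck_on_smooth_step Ck_on_affine]) simp_all
  then have "Ck_on k UNIV (ramp a b)"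
    by (rule Ck_on_cong[OF open_UNIV, rotated])
       (simp add: ramp_def divide_inverse algebra_simps)
  then show ?thesis by (rule Ck_on_subset) simp
qed

lemma ramp_has_derivative:
  assumes "a < b"
  obtains D where "(ramp a b has_real_derivative D) (at x)" "D \<ge> 0" "x < a \<or> b < x \<Longrightarrow> D = 0"
proof
  let ?z = "(x - a) / (b - a)"
  have "((\<lambda>x. (x - a) / (b - a)) has_real_derivative inverse (b - a)) (at x)"
    by (auto intro!: derivative_eq_intros simp: divide_inverse)
  then show "(ramp a b has_real_derivative deriv smooth_step ?z * inverse (b - a)) (at x)"
    unfolding ramp_def[abs_def]
    by (rule DERIV_chain2[OF has_real_derivative_deriv[OF smooth_step_differentiable]])
  show "deriv smooth_step ?z * inverse (b - a) \<ge> 0"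
    using deriv_smooth_step_nonneg assms by simp
  assume "x < a \<or> b < x"
  then have "?z < 0 \<or> ?z > 1" using assms by (auto simp: field_simps)
  then show "deriv smooth_step ?z * inverse (b - a) = 0" by (simp add: deriv_smooth_step_eq_0)
qed

lemma blend_has_derivative_pos:
  assumes "(f has_real_derivative f') (at x)" "f' > 0" "(g has_real_derivative g') (at x)" "g' > 0"
    and "(w has_real_derivative w') (at x)" "0 \<le> w x" "w x \<le> 1" "w' * (g x - f x) \<ge> 0"
  shows "\<exists>D>0. ((\<lambda>y. (1 - w y) * f y + w y * g y) has_real_derivative D) (at x)"
proof (intro exI conjI)
  show "((\<lambda>y. (1 - w y) * f y + w y * g y) has_real_derivative
      (1 - w x) * f' + w x * g' + w' * (g x - f x)) (at x)"
    using assms(1,3,5) by (auto intro!: derivative_eq_intros simp: algebra_simps)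
  have "(1 - w x) * f' + w x * g' > 0"
  proof (cases "w x < 1")
    case True
    then show ?thesis using assms(2,4,6) by (simp add: add_pos_nonneg)
  next
    case False
    then show ?thesis using assms(4,7) by simp
  qed
  then show "(1 - w x) * f' + w x * g' + w' * (g x - f x) > 0" using assms(8) by linarith
qed

lemma Ck_local_diffeo_strict_mono_if_deriv_pos:
  assumes "Ck_on k UNIV T" "\<And>y. \<exists>D>0. (T has_real_derivative D) (at y)"
  shows "Ck_local_diffeo k UNIV T" "strict_mono T"
proof -
  have "T differentiable (at y) \<and> deriv T y \<noteq> 0" for y
    using assms(2)[of y] DERIV_imp_deriv real_differentiable_def by fastforce
  then show "Ck_local_diffeo k UNIV T" using assms(1) by (simp add: Ck_local_diffeo_def)
  show "strict_mono T"
    by (rule strict_monoI, rule DERIV_pos_imp_increasing) (use assms(2) in auto)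
qed

lemma increasing_local_diffeo_extension:
  assumes t: "Ck_local_diffeo k {u<..<v} t" and mono: "strict_mono_on {u<..<v} t"
    and y: "u < y1" "y1 \<le> y2" "y2 < v"
  obtains T where "Ck_local_diffeo k UNIV T" "strict_mono T" "\<And>y. y \<in> {y1..y2} \<Longrightarrow> T y = t y"
proof -
  define y0 where "y0 = (u + y1) / 2"
  define y3 where "y3 = (y2 + v) / 2"
  have y03: "u < y0" "y0 < y1" "y2 < y3" "y3 < v" using y by (auto simp: y0_def y3_def)
  have "continuous_on {y0..y3} (\<lambda>y. t y - y)"
    using Ck_local_diffeo_continuous[OF t] y03
    by (auto intro!: continuous_intros elim: continuous_on_subset)
  then have "bounded ((\<lambda>y. t y - y) ` {y0..y3})"
    by (intro compact_imp_bounded compact_continuous_image compact_Icc)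
  then obtain c where c: "\<And>y. y \<in> {y0..y3} \<Longrightarrow> \<bar>t y - y\<bar> \<le> c"
    unfolding bounded_iff by (auto simp del: atLeastAtMost_iff)
  text \<open>Blend \<open>t\<close> into \<open>y + c\<close> over \<open>[y2, y3]\<close> and into \<open>y - c\<close> over \<open>[y0, y1]\<close>;
    the choice of \<open>c\<close> makes both blends increase.\<close>
  define r where "r = ramp y2 y3"
  define l where "l y = ramp (- y1) (- y0) (- y)" for y
  define s where "s y = (1 - r y) * t y + r y * (y + c)" for y
  define T where "T y = (1 - l y) * s y + l y * (y - c)" for y
  have r0: "r y = 0" if "y \<le> y2" for y using that y03 by (simp add: r_def ramp_eq_0)
  have r1: "r y = 1" if "y3 \<le> y" for y using that y03 by (simp add: r_def ramp_eq_1)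
  have l0: "l y = 0" if "y1 \<le> y" for y using that y03 by (simp add: l_def ramp_eq_0)
  have l1: "l y = 1" if "y \<le> y0" for y using that y03 by (simp add: l_def ramp_eq_1)
  have T_mid: "T y = t y" if "y \<in> {y1..y2}" for y using that r0 l0 by (simp add: T_def s_def)
  have T_right: "T y = y + c" if "y3 < y" for y
    using that r1[of y] l0[of y] y03 y by (simp add: T_def s_def)
  have T_left: "T y = y - c" if "y < y0" for y using that l1 by (simp add: T_def s_def)
  have T_deriv_mid: "\<exists>D>0. (T has_real_derivative D) (at y)" if yuv: "y \<in> {u<..<v}" for y
  proof -
    have td: "t differentiable (at y)" "deriv t y \<noteq> 0"
      using t yuv unfolding Ck_local_diffeo_def by blast+
    have dt: "(t has_real_derivative deriv t y) (at y)" "deriv t y > 0"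
      using has_real_derivative_deriv[OF td(1)] deriv_pos_if_strict_mono_on[OF mono _ yuv td] by auto
    obtain Dr where Dr: "(r has_real_derivative Dr) (at y)" "Dr \<ge> 0" "y < y2 \<or> y3 < y \<Longrightarrow> Dr = 0"
      using ramp_has_derivative[of y2 y3 y] y03 unfolding r_def by blast
    have Dr_sign: "Dr * ((y + c) - t y) \<ge> 0"
    proof (cases "y < y2 \<or> y3 < y")
      case False
      then have "t y - y \<le> c" using c[of y] y y03 by auto
      then show ?thesis using Dr(2) by simp
    qed (use Dr(3) in simp)
    have lin: "((\<lambda>y. y + a) has_real_derivative 1) (at y)" "((\<lambda>y. y - a) has_real_derivative 1) (at y)"
      for a by (auto intro!: derivative_eq_intros)
    have "\<exists>D>0. (s has_real_derivative D) (at y)"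
      unfolding s_def[abs_def]
      by (rule blend_has_derivative_pos[OF dt lin(1) zero_less_one Dr(1)])
         (use Dr_sign in \<open>simp_all add: r_def ramp_bounds\<close>)
    then obtain Ds where Ds: "(s has_real_derivative Ds) (at y)" "Ds > 0" by blast
    obtain Dl where Dl: "(ramp (- y1) (- y0) has_real_derivative Dl) (at (- y))" "Dl \<ge> 0"
      "- y < - y1 \<or> - y0 < - y \<Longrightarrow> Dl = 0"
      using ramp_has_derivative[of "- y1" "- y0" "- y"] y03 by auto
    have dl: "(l has_real_derivative Dl * - 1) (at y)"
      unfolding l_def[abs_def]
      by (rule DERIV_chain2[where g = uminus, OF Dl(1)]) (auto intro!: derivative_eq_intros)
    have Dl_sign: "Dl * - 1 * ((y - c) - s y) \<ge> 0"
    proof (cases "y0 \<le> y \<and> y \<le> y1")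
      case True
      then have "y - c - s y \<le> 0" using c[of y] r0[of y] y y03 by (auto simp: s_def)
      then show ?thesis using Dl(2) by (simp add: mult_nonneg_nonpos)
    qed (use Dl(3) in auto)
    show ?thesis
      unfolding T_def[abs_def]
      by (rule blend_has_derivative_pos[OF Ds lin(2) zero_less_one dl])
         (use Dl_sign in \<open>simp_all add: l_def ramp_bounds\<close>)
  qed
  have cover: "y \<in> {u<..<v} \<or> y \<in> {y3<..} \<or> y \<in> {..<y0}" for y
    using y03 by (cases "y < y0"; cases "y3 < y") auto
  have "\<exists>D>0. (T has_real_derivative D) (at y)" for y
  proof -
    have "((\<lambda>y. y + a) has_real_derivative 1) (at y)" for a by (auto intro!: derivative_eq_intros)
    then have "(T has_real_derivative 1) (at y)" if "y \<in> {y3<..} \<or> y \<in> {..<y0}"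
      using that has_field_derivative_transform_within_open[of _ 1 y _ T] T_right T_left
      by (metis open_greaterThan open_lessThan greaterThan_iff lessThan_iff diff_conv_add_uminus)
    then show ?thesis using cover T_deriv_mid zero_less_one by blast
  qed
  moreover have "Ck_on k UNIV T"
  proof (rule Ck_on_local[OF open_UNIV])
    fix y :: real
    have "Ck_on k UNIV (\<lambda>y. ramp (- y1) (- y0) (-1 * y + 0))"
      by (rule Ck_on_compose[OF open_UNIV open_UNIV _ Ck_on_ramp Ck_on_affine]) simp_all
    then have "Ck_on k {u<..<v} l" by (auto simp: l_def[abs_def] elim: Ck_on_subset)
    moreover have "Ck_on k {u<..<v} t" using t by (simp add: Ck_local_diffeo_def)
    ultimately have "Ck_on k {u<..<v} T"
      unfolding T_def[abs_def] s_def[abs_def] r_def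
      by (intro Ck_on_add Ck_on_mult Ck_on_diff Ck_on_const Ck_on_id Ck_on_ramp) simp_all
    moreover have "Ck_on k {y3<..} T"
      by (rule Ck_on_cong[OF _ _ Ck_on_affine[of _ k 1 c]]) (auto simp: T_right)
    moreover have "Ck_on k {..<y0} T"
      by (rule Ck_on_cong[OF _ _ Ck_on_affine[of _ k 1 "- c"]]) (auto simp: T_left)
    ultimately show "\<exists>S. open S \<and> y \<in> S \<and> S \<subseteq> UNIV \<and> Ck_on k S T"
      using cover[of y] by (meson open_greaterThanLessThan open_greaterThan open_lessThan subset_UNIV)
  qed
  ultimately show ?thesis using that Ck_local_diffeo_strict_mono_if_deriv_pos T_mid by blast
qed

lemma continuous_inj_imp_strict_mono_on:
  fixes f :: "real \<Rightarrow> real"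
  assumes ab: "a < b" and cont: "continuous_on {a..b} f" and inj: "inj_on f {a..b}" and "f a < f b"
  shows "strict_mono_on {a..b} f"
proof (rule strict_mono_onI)
  have mid: "f a < f m \<and> f m < f b" if "a < m" "m < b" for m
    using continuous_inj_imp_mono[OF that cont inj] \<open>f a < f b\<close> by auto
  fix r s assume r: "r \<in> {a..b}" and s: "s \<in> {a..b}" and "r < s"
  show "f r < f s"
  proof (cases "r = a")
    case True
    then show ?thesis using mid[of s] \<open>f a < f b\<close> s \<open>r < s\<close> by (cases "s = b") auto
  next
    case False
    then have "a < r" "r < b" using r s \<open>r < s\<close> by auto
    moreover have "(f a < f r \<and> f r < f s) \<or> (f s < f r \<and> f r < f a)"
      using \<open>a < r\<close> \<open>r < s\<close> continuous_on_subset[OF cont] inj_on_subset[OF inj] s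
      by (intro continuous_inj_imp_mono) auto
    ultimately show ?thesis using mid[of r] by auto
  qed
qed

lemma strict_mono_on_image_greaterThanLessThan:
  fixes f :: "real \<Rightarrow> real"
  assumes "p < q" "continuous_on {p..q} f" "strict_mono_on {p..q} f"
  shows "f ` {p<..<q} = {f p<..<f q}"
proof
  show "f ` {p<..<q} \<subseteq> {f p<..<f q}"
    using assms(3) by (auto simp: strict_mono_on_def)
  show "{f p<..<f q} \<subseteq> f ` {p<..<q}"
  proof
    fix y assume y: "y \<in> {f p<..<f q}"
    then obtain x where "p \<le> x" "x \<le> q" "f x = y"
      using IVT'[of f p y q] assms(1,2) by auto
    moreover have "x \<noteq> p" "x \<noteq> q" using y \<open>f x = y\<close> by auto
    ultimately show "y \<in> f ` {p<..<q}" by auto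
  qed
qed

lemma strict_mono_on_Un:
  fixes f :: "real \<Rightarrow> real"
  assumes S: "strict_mono_on S f" "is_interval S" and T: "strict_mono_on T f" "is_interval T"
    and "S \<inter> T \<noteq> {}"
  shows "strict_mono_on (S \<union> T) f"
proof -
  obtain m where m: "m \<in> S" "m \<in> T" using \<open>S \<inter> T \<noteq> {}\<close> by blast
  have across: "f r < f s" if "r \<in> X" "s \<in> Y" "r < s" "strict_mono_on X f" "is_interval X"
    "strict_mono_on Y f" "is_interval Y" "m \<in> X" "m \<in> Y" for X Y r s
  proof -
    consider "m \<le> r" | "s \<le> m" | "r < m" "m < s" by linarith
    then show ?thesis
    proof cases
      case 1
      then have "r \<in> Y" using that is_interval_1 by (meson less_imp_le)
      then show ?thesis using that by (auto simp: strict_mono_on_def)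
    next
      case 2
      then have "s \<in> X" using that is_interval_1 by (meson less_imp_le)
      then show ?thesis using that by (auto simp: strict_mono_on_def)
    next
      case 3
      then show ?thesis using that by (meson strict_mono_onD order.strict_trans)
    qed
  qed
  show ?thesis
    by (rule strict_mono_onI)
       (use S T m across[of _ S _ T] across[of _ T _ S] in \<open>auto simp: strict_mono_on_def\<close>)
qed

lemma nonneg_real_induct:
  fixes P :: "real \<Rightarrow> bool"
  assumes "P 0" and down: "\<And>r r'. P r \<Longrightarrow> r' \<le> r \<Longrightarrow> P r'"
    and step: "\<And>s. s \<ge> 0 \<Longrightarrow> (\<And>r. r < s \<Longrightarrow> P r) \<Longrightarrow> \<exists>r>s. P r"
  shows "P r"
proof (rule ccontr)
  assume "\<not> P r"
  define F where "F = {r. \<not> P r}"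
  have "F \<noteq> {}" using \<open>\<not> P r\<close> by (auto simp: F_def)
  have F_pos: "x \<ge> 0" if "x \<in> F" for x
    using that down[OF \<open>P 0\<close>, of x] by (force simp: F_def)
  then have "bdd_below F" by (auto simp: bdd_below_def)
  have "Inf F \<ge> 0" using \<open>F \<noteq> {}\<close> F_pos by (intro cInf_greatest) auto
  moreover have "P r" if "r < Inf F" for r
    using cInf_lower[OF _ \<open>bdd_below F\<close>, of r] that by (force simp: F_def)
  ultimately obtain r where "r > Inf F" "P r" using step by blast
  moreover obtain x where "x \<in> F" "x < r"
    using cInf_less_iff[OF \<open>F \<noteq> {}\<close> \<open>bdd_below F\<close>] \<open>r > Inf F\<close> by blast
  ultimately show False using down by (auto simp: F_def)
qed

lemma Ck_local_diffeo_arctan: "Ck_local_diffeo k UNIV arctan"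
proof -
  have deriv_arctan: "deriv arctan = (\<lambda>x. inverse (1 + x * x))"
    by (rule ext, rule DERIV_imp_deriv) (use DERIV_arctan in \<open>simp add: power2_eq_square\<close>)
  have pos: "1 + x * x > 0" for x :: real by (simp add: add_pos_nonneg)
  then have nz: "1 + x * x \<noteq> 0" for x :: real by (metis less_irrefl)
  have "Cn_on n UNIV arctan" for n
  proof (cases n)
    case (Suc m)
    have "Cn_on m UNIV (\<lambda>x. inverse (1 + x * x))"
      using nz by (intro Cn_on_inverse Cn_on_add Cn_on_mult Cn_on_const Cn_on_id) auto
    then show ?thesis
      using Suc DERIV_arctan by (auto simp: deriv_arctan real_differentiable_def)
  qed (simp add: continuous_at_imp_continuous_on isCont_arctan)
  moreover have "arctan differentiable (at x)" for x
    using DERIV_arctan real_differentiable_def by blast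
  ultimately show ?thesis
    using nz unfolding Ck_local_diffeo_def by (auto intro!: Ck_onI simp: deriv_arctan)
qed

lemma arctan_range: "range arctan = {- (pi / 2)<..<pi / 2}"
proof
  show "range arctan \<subseteq> {- (pi / 2)<..<pi / 2}" using arctan_lbound arctan_ubound by auto
  show "{- (pi / 2)<..<pi / 2} \<subseteq> range arctan"
  proof
    fix y :: real assume "y \<in> {- (pi / 2)<..<pi / 2}"
    then have "arctan (tan y) = y" by (intro arctan_tan) auto
    then show "y \<in> range arctan" by (metis rangeI)
  qed
qed

lemma Ck_local_diffeo_tan: "Ck_local_diffeo k {- (pi / 2)<..<pi / 2} tan"
proof -
  have "inj arctan" by (rule injI) (metis tan_arctan)
  then have "Ck_local_diffeo k {- (pi / 2)<..<pi / 2} (inv_into UNIV arctan)"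
    using Ck_local_diffeo_inv_into[OF Ck_local_diffeo_arctan] by (simp add: arctan_range)
  then show ?thesis
    by (rule Ck_local_diffeo_cong[OF open_greaterThanLessThan, rotated])
       (metis arctan_tan inv_into_f_f[OF \<open>inj arctan\<close> UNIV_I] greaterThanLessThan_iff)
qed

lemma range_strict_mono_bounded:
  fixes f :: "real \<Rightarrow> real"
  assumes cont: "continuous_on UNIV f" and mono: "strict_mono f" and bdd: "bounded (range f)"
  shows "range f = {Inf (range f)<..<Sup (range f)}"
proof
  have bdd': "bdd_below (range f)" "bdd_above (range f)"
    using bounded_imp_bdd_below[OF bdd] bounded_imp_bdd_above[OF bdd] .
  show "range f \<subseteq> {Inf (range f)<..<Sup (range f)}"
  proof
    fix y assume "y \<in> range f"
    then obtain x where "y = f x" by auto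
    moreover have "Inf (range f) \<le> f (x - 1)" "f (x + 1) \<le> Sup (range f)"
      using bdd' by (auto intro: cInf_lower cSup_upper)
    moreover have "f (x - 1) < f x" "f x < f (x + 1)" using mono by (auto simp: strict_mono_def)
    ultimately show "y \<in> {Inf (range f)<..<Sup (range f)}" by auto
  qed
  show "{Inf (range f)<..<Sup (range f)} \<subseteq> range f"
  proof
    fix y assume y: "y \<in> {Inf (range f)<..<Sup (range f)}"
    obtain x1 where x1: "f x1 < y" using y cInf_less_iff[of "range f" y] bdd' by auto
    obtain x2 where x2: "y < f x2" using y less_cSup_iff[of "range f" y] bdd' by auto
    have "x1 \<le> x2"
    proof (rule ccontr)
      assume "\<not> x1 \<le> x2"
      then have "f x2 < f x1" using mono by (simp add: strict_mono_def)
      then show False using x1 x2 by simp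
    qed
    moreover have "continuous_on {x1..x2} f" using cont by (rule continuous_on_subset) simp
    ultimately obtain x where "f x = y"
      using IVT'[of f x1 y x2] x1 x2 by force
    then show "y \<in> range f" by auto
  qed
qed

lemma homeomorphism_strict_mono_surj:
  fixes \<Omega> :: "real \<Rightarrow> real"
  assumes "continuous_on UNIV \<Omega>" "strict_mono \<Omega>" "surj \<Omega>"
  shows "homeomorphism UNIV UNIV \<Omega> (inv \<Omega>)"
proof -
  have inj: "inj \<Omega>" by (rule strict_mono_imp_inj_on[OF assms(2)])
  have "continuous_on UNIV (inv \<Omega>)"
    using continuous_on_inverse_open[OF open_UNIV assms(1)] inj assms(3) by (simp add: inv_f_f)
  moreover have "range (inv \<Omega>) = UNIV"
    using inv_f_f[OF inj] by (metis surj_def)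
  ultimately show ?thesis
    unfolding homeomorphism_def using assms(1,3) inj by (simp add: inv_f_f surj_f_inv_f)
qed

lemma Ck_compatible_same_map:
  fixes \<phi> :: "real \<Rightarrow> real"
  assumes inj: "inj \<phi>" and cont: "continuous_on UNIV \<phi>" and "open U" "open V"
  shows "Ck_compatible k (U, \<phi>) (V, \<phi>)"
proof -
  let ?S = "\<phi> ` (U \<inter> V)"
  have inv: "\<phi> (inv_into U \<phi> y) = y" if y: "y \<in> ?S" for y
  proof -
    obtain w where "w \<in> U" "y = \<phi> w" using y by blast
    then show ?thesis by (simp add: inv_into_f_f[OF inj_on_subset[OF inj subset_UNIV]])
  qed
  have "open ?S"
    by (rule invariance_of_domain[OF continuous_on_subset[OF cont subset_UNIV]
          open_Int[OF assms(3,4)] inj_on_subset[OF inj subset_UNIV]])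
  then have "Ck_local_diffeo k ?S (\<lambda>y. 1 * y + 0)" by (rule Ck_local_diffeo_affine) simp
  then have "Ck_local_diffeo k ?S (\<phi> \<circ> inv_into U \<phi>)"
    by (rule Ck_local_diffeo_cong[OF \<open>open ?S\<close>, rotated]) (use inv in simp)
  moreover have "inj_on (\<phi> \<circ> inv_into U \<phi>) ?S" by (rule inj_onI) (simp add: inv)
  ultimately have "Ck_diffeo k ?S ((\<phi> \<circ> inv_into U \<phi>) ` ?S) (\<phi> \<circ> inv_into U \<phi>)"
    by (rule Ck_local_diffeo_imp_Ck_diffeo)
  moreover have "(\<phi> \<circ> inv_into U \<phi>) ` ?S = id ` ?S" by (rule image_cong) (simp_all add: inv)
  ultimately show ?thesis unfolding Ck_compatible_def by simp
qed

lemma chain_like_preimages: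
  fixes \<Omega> :: "real \<Rightarrow> real"
  assumes cont: "continuous_on UNIV \<Omega>" and mono: "strict_mono \<Omega>" and onto: "surj \<Omega>"
  defines "V \<equiv> \<lambda>i::int. (\<Omega> -` {of_int i<..<of_int i + 2}, \<Omega>)"
  shows "chain_like k V"
proof -
  have inj: "inj \<Omega>" by (rule strict_mono_imp_inj_on[OF mono])
  have hom: "homeomorphism UNIV UNIV \<Omega> (inv \<Omega>)"
    by (rule homeomorphism_strict_mono_surj[OF assms(1-3)])
  have img: "\<Omega> ` (\<Omega> -` S) = S" for S using onto by (simp add: surj_image_vimage_eq)
  have open_dom: "open (fst (V i))" for i
    unfolding V_def by (auto intro: open_vimage[OF _ cont])
  have charts: "is_chart (V i)" for i
  proof -
    let ?D = "\<Omega> -` {of_int i<..<of_int i + 2}"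
    have "homeomorphism ?D (\<Omega> ` ?D) \<Omega> (inv \<Omega>)"
      using homeomorphism_of_subsets[OF hom subset_UNIV subset_UNIV refl] by blast
    moreover have "open (\<Omega> ` ?D)" unfolding img by simp
    ultimately show ?thesis using open_dom[of i] unfolding is_chart_def V_def by auto
  qed
  have "Ck_compatible k (V i) (V j)" for i j
    using Ck_compatible_same_map[OF inj cont open_dom open_dom] by (simp add: V_def)
  moreover have "\<Union> (fst ` range V) = UNIV"
  proof -
    have "x \<in> fst (V (\<lceil>\<Omega> x\<rceil> - 1))" for x
      by (simp add: V_def) linarith
    then show ?thesis by blast
  qed
  ultimately have "Ck_atlas k (range V)"
    using charts by (auto simp: Ck_atlas_def Ck_compatible_family_def)
  moreover have "Ck_joinable k (V i) (V (i + 1))" for i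
  proof -
    let ?D = "\<lambda>a b. \<Omega> -` {a<..<b}" and ?a = "of_int i :: real"
    have V: "V i = (?D ?a (?a + 2), \<Omega>)" "V (i + 1) = (?D (?a + 1) (?a + 3), \<Omega>)"
      by (simp_all add: V_def add.assoc)
    have inter: "?D ?a (?a + 2) \<inter> ?D (?a + 1) (?a + 3) = ?D (?a + 1) (?a + 2)" by auto
    show ?thesis
      using \<open>Ck_compatible k (V i) (V (i + 1))\<close> unfolding Ck_joinable_def V prod.case inter img
      by (intro conjI exI[of _ ?a] exI[of _ "?a + 1"] exI[of _ "?a + 2"] exI[of _ "?a + 3"]) auto
  qed
  moreover have "fst (V j) \<inter> fst (V i) \<inter> fst (V (i + 1)) = {}" if "j \<noteq> i" "j \<noteq> i + 1" for i j
  proof -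
    have "\<not> (of_int j < y \<and> y < of_int j + 2 \<and> of_int i + 1 < y \<and> y < of_int i + 2)" for y :: real
    proof
      assume "of_int j < y \<and> y < of_int j + 2 \<and> of_int i + 1 < y \<and> y < of_int i + 2"
      then have "(of_int j :: real) < of_int (i + 2)" "(of_int (i + 1) :: real) < of_int (j + 2)"
        by simp_all
      then have "j < i + 2" "i + 1 < j + 2" by (simp_all only: of_int_less_iff)
      then show False using that by simp
    qed
    then show ?thesis by (auto simp: V_def)
  qed
  ultimately show ?thesis by (simp add: chain_like_def)
qed

locale Ck_real_atlas =
  fixes k :: enat and A :: "chart set"
  assumes k_ge_1: "k \<ge> 1" and atlas: "Ck_atlas k A"
begin

lemma chart_is_chart: "(W, c) \<in> A \<Longrightarrow> is_chart (W, c)"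
  using atlas unfolding Ck_atlas_def Ck_compatible_family_def by blast

lemma chart_open: "(W, c) \<in> A \<Longrightarrow> open W"
  using chart_is_chart unfolding is_chart_def by auto

lemma chart_continuous: "(W, c) \<in> A \<Longrightarrow> continuous_on W c"
  using chart_is_chart unfolding is_chart_def homeomorphism_def by auto

lemma chart_inj: "(W, c) \<in> A \<Longrightarrow> inj_on c W"
proof -
  assume "(W, c) \<in> A"
  then obtain g where "homeomorphism W (c ` W) c g" using chart_is_chart unfolding is_chart_def by auto
  then have "\<And>x. x \<in> W \<Longrightarrow> g (c x) = x" by (simp add: homeomorphism_def)
  then show ?thesis by (rule inj_on_inverseI)
qed

lemma chart_covers: "\<exists>W c. (W, c) \<in> A \<and> x \<in> W"
proof -
  have "x \<in> \<Union>(fst ` A)" using atlas by (simp add: Ck_atlas_def)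
  then show ?thesis by force
qed

lemma open_chart_image: "(W, c) \<in> A \<Longrightarrow> open S \<Longrightarrow> S \<subseteq> W \<Longrightarrow> open (c ` S)"
  by (rule invariance_of_domain)
     (auto intro: continuous_on_subset[OF chart_continuous] inj_on_subset[OF chart_inj])

lemma open_chart_image_Int: "(W, c) \<in> A \<Longrightarrow> open S \<Longrightarrow> open (c ` (S \<inter> W))"
  by (rule open_chart_image) (auto intro: open_Int dest: chart_open)

lemma chart_inv_into:
  assumes "(W, c) \<in> A" "y \<in> c ` S" "S \<subseteq> W"
  shows "inv_into W c y \<in> S" "c (inv_into W c y) = y"
proof -
  obtain x where "x \<in> S" "y = c x" using assms(2) by blast
  moreover have "inv_into W c (c x) = x"
    using inv_into_f_f[OF chart_inj[OF assms(1)]] \<open>x \<in> S\<close> assms(3) by blast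
  ultimately show "inv_into W c y \<in> S" "c (inv_into W c y) = y" by simp_all
qed

lemma chart_transition:
  assumes Wc: "(W, c) \<in> A" and Wc': "(W', c') \<in> A"
  shows "Ck_local_diffeo k (c' ` (W' \<inter> W)) (\<lambda>y. c (inv_into W' c' y))"
proof (cases "W' \<inter> W = {}")
  case True
  then show ?thesis by (simp add: Ck_local_diffeo_empty)
next
  case False
  have "Ck_compatible k (W', c') (W, c)"
    using atlas Wc Wc' unfolding Ck_atlas_def Ck_compatible_family_def by blast
  then have "Ck_diffeo k (c' ` (W' \<inter> W)) (c ` (W' \<inter> W)) (c \<circ> inv_into W' c')"
    using False unfolding Ck_compatible_def by simp
  moreover have "open (c' ` (W' \<inter> W))"
    using open_chart_image_Int[OF Wc' chart_open[OF Wc]] by (simp add: Int_commute)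
  ultimately show ?thesis
    using Ck_diffeo_imp_Ck_local_diffeo k_ge_1 by (simp add: o_def)
qed

definition atlas_local_diffeo :: "real set \<Rightarrow> (real \<Rightarrow> real) \<Rightarrow> bool" where
  "atlas_local_diffeo S f \<longleftrightarrow> open S \<and>
     (\<forall>W c. (W, c) \<in> A \<longrightarrow> Ck_local_diffeo k (c ` (S \<inter> W)) (\<lambda>y. f (inv_into W c y)))"

definition increasing_coordinate :: "real set \<Rightarrow> (real \<Rightarrow> real) \<Rightarrow> bool" where
  "increasing_coordinate S f \<longleftrightarrow> atlas_local_diffeo S f \<and> strict_mono_on S f"

lemma atlas_local_diffeoD:
  "atlas_local_diffeo S f \<Longrightarrow> (W, c) \<in> A \<Longrightarrow>
    Ck_local_diffeo k (c ` (S \<inter> W)) (\<lambda>y. f (inv_into W c y))"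
  unfolding atlas_local_diffeo_def by blast

lemma atlas_local_diffeo_subset:
  assumes "atlas_local_diffeo S f" "open T" "T \<subseteq> S"
  shows "atlas_local_diffeo T f"
  unfolding atlas_local_diffeo_def
proof (intro conjI allI impI)
  fix W c assume Wc: "(W, c) \<in> A"
  show "Ck_local_diffeo k (c ` (T \<inter> W)) (\<lambda>y. f (inv_into W c y))"
    by (rule Ck_local_diffeo_subset[OF atlas_local_diffeoD[OF assms(1) Wc]])
       (use assms(2,3) open_chart_image_Int[OF Wc] in auto)
qed (rule assms(2))

lemma atlas_local_diffeo_local:
  assumes "open S" "\<And>x. x \<in> S \<Longrightarrow> \<exists>T. open T \<and> x \<in> T \<and> T \<subseteq> S \<and> atlas_local_diffeo T f"
  shows "atlas_local_diffeo S f"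
  unfolding atlas_local_diffeo_def
proof (intro conjI allI impI)
  fix W c assume Wc: "(W, c) \<in> A"
  show "Ck_local_diffeo k (c ` (S \<inter> W)) (\<lambda>y. f (inv_into W c y))"
  proof (rule Ck_local_diffeo_local)
    show "open (c ` (S \<inter> W))" using assms(1) by (rule open_chart_image_Int[OF Wc])
    fix y assume "y \<in> c ` (S \<inter> W)"
    then have x: "inv_into W c y \<in> S \<inter> W" "c (inv_into W c y) = y"
      using chart_inv_into[OF Wc _ Int_lower2] by auto
    then obtain T where T: "open T" "inv_into W c y \<in> T" "T \<subseteq> S" "atlas_local_diffeo T f"
      using assms(2) by blast
    moreover have "y \<in> c ` (T \<inter> W)" using x T(2) by (metis IntI IntD2 image_eqI)
    ultimately show "\<exists>N. open N \<and> y \<in> N \<and> N \<subseteq> c ` (S \<inter> W) \<and> Ck_local_diffeo k N (\<lambda>y. f (inv_into W c y))"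
      using atlas_local_diffeoD[OF T(4) Wc] open_chart_image_Int[OF Wc T(1)]
      by (intro exI[of _ "c ` (T \<inter> W)"]) auto
  qed
qed (rule assms(1))

lemma atlas_local_diffeo_Un:
  "atlas_local_diffeo S f \<Longrightarrow> atlas_local_diffeo T f \<Longrightarrow> atlas_local_diffeo (S \<union> T) f"
  by (rule atlas_local_diffeo_local) (auto simp: atlas_local_diffeo_def)

lemma atlas_local_diffeo_cong:
  assumes "atlas_local_diffeo S f" "\<And>x. x \<in> S \<Longrightarrow> f x = g x"
  shows "atlas_local_diffeo S g"
  unfolding atlas_local_diffeo_def
proof (intro conjI allI impI)
  show "open S" using assms(1) by (simp add: atlas_local_diffeo_def)
  fix W c assume Wc: "(W, c) \<in> A"
  show "Ck_local_diffeo k (c ` (S \<inter> W)) (\<lambda>y. g (inv_into W c y))"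
  proof (rule Ck_local_diffeo_cong[OF _ _ atlas_local_diffeoD[OF assms(1) Wc]])
    show "open (c ` (S \<inter> W))" using \<open>open S\<close> by (rule open_chart_image_Int[OF Wc])
    fix y assume "y \<in> c ` (S \<inter> W)"
    then show "f (inv_into W c y) = g (inv_into W c y)"
      using chart_inv_into[OF Wc _ Int_lower2] assms(2) by blast
  qed
qed

lemma atlas_local_diffeo_compose:
  assumes "atlas_local_diffeo S f" "Ck_local_diffeo k T g" "f ` S \<subseteq> T"
  shows "atlas_local_diffeo S (\<lambda>x. g (f x))"
  unfolding atlas_local_diffeo_def
proof (intro conjI allI impI)
  show "open S" using assms(1) by (simp add: atlas_local_diffeo_def)
  fix W c assume Wc: "(W, c) \<in> A"
  show "Ck_local_diffeo k (c ` (S \<inter> W)) (\<lambda>y. g (f (inv_into W c y)))"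
  proof (rule Ck_local_diffeo_compose[OF assms(2) atlas_local_diffeoD[OF assms(1) Wc]])
    show "(\<lambda>y. f (inv_into W c y)) ` c ` (S \<inter> W) \<subseteq> T"
    proof (rule image_subsetI)
      fix y assume "y \<in> c ` (S \<inter> W)"
      then have "inv_into W c y \<in> S \<inter> W" by (rule chart_inv_into(1)[OF Wc _ Int_lower2])
      then show "f (inv_into W c y) \<in> T" using assms(3) by blast
    qed
  qed
qed

lemma atlas_local_diffeo_chart:
  assumes "(W, c) \<in> A"
  shows "atlas_local_diffeo W c"
  unfolding atlas_local_diffeo_def
proof (intro conjI allI impI)
  fix W' c' assume "(W', c') \<in> A"
  then show "Ck_local_diffeo k (c' ` (W \<inter> W')) (\<lambda>y. c (inv_into W' c' y))"
    using chart_transition[OF assms] Int_commute[of W W'] by metis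
qed (rule chart_open[OF assms])

lemma atlas_local_diffeo_continuous:
  assumes "atlas_local_diffeo S f"
  shows "continuous_on S f"
proof (rule continuous_at_imp_continuous_on, rule ballI)
  fix x assume "x \<in> S"
  obtain W c where Wc: "(W, c) \<in> A" "x \<in> W" using chart_covers by blast
  have "continuous_on (S \<inter> W) (\<lambda>x. f (inv_into W c (c x)))"
    by (rule continuous_on_compose2[OF Ck_local_diffeo_continuous[OF atlas_local_diffeoD[OF assms Wc(1)]]
          continuous_on_subset[OF chart_continuous[OF Wc(1)]]]) auto
  then have "continuous_on (S \<inter> W) f"
    by (rule continuous_on_cong[THEN iffD1, rotated 2]) (use inv_into_f_f[OF chart_inj[OF Wc(1)]] in auto)
  moreover have "open (S \<inter> W)" using assms Wc chart_open by (auto simp: atlas_local_diffeo_def)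
  ultimately show "isCont f x" using \<open>x \<in> S\<close> Wc(2) continuous_on_eq_continuous_at by blast
qed

lemma increasing_coordinate_subset:
  "increasing_coordinate S f \<Longrightarrow> open T \<Longrightarrow> T \<subseteq> S \<Longrightarrow> increasing_coordinate T f"
  unfolding increasing_coordinate_def by (metis atlas_local_diffeo_subset monotone_on_subset)

lemma increasing_coordinate_cong:
  "increasing_coordinate S f \<Longrightarrow> (\<And>x. x \<in> S \<Longrightarrow> f x = g x) \<Longrightarrow> increasing_coordinate S g"
  unfolding increasing_coordinate_def strict_mono_on_def
  by (metis atlas_local_diffeo_cong)

lemma increasing_coordinate_Un:
  "increasing_coordinate S f \<Longrightarrow> increasing_coordinate T f \<Longrightarrow> is_interval S \<Longrightarrow> is_interval T \<Longrightarrow>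
    S \<inter> T \<noteq> {} \<Longrightarrow> increasing_coordinate (S \<union> T) f"
  unfolding increasing_coordinate_def by (simp add: atlas_local_diffeo_Un strict_mono_on_Un)

lemma increasing_coordinate_near: "\<exists>e>0. \<exists>\<phi>. increasing_coordinate {x - e<..<x + e} \<phi>"
proof -
  obtain W c where Wc: "(W, c) \<in> A" "x \<in> W" using chart_covers by blast
  then obtain e where e: "e > 0" "cball x e \<subseteq> W"
    using chart_open open_contains_cball by blast
  then have sub: "{x - e..x + e} \<subseteq> W" by (simp add: cball_eq_atLeastAtMost)
  have cont: "continuous_on {x - e..x + e} c" and inj: "inj_on c {x - e..x + e}"
    using chart_continuous[OF Wc(1)] chart_inj[OF Wc(1)] sub
    by (auto intro: continuous_on_subset inj_on_subset)
  have "x - e < x + e" using e by simp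
  then have "c (x - e) \<noteq> c (x + e)" using inj_onD[OF inj] by fastforce
  then obtain s :: real where s: "s \<noteq> 0" "s * c (x - e) < s * c (x + e)"
  proof (cases "c (x - e) < c (x + e)")
    case True
    then show ?thesis using that[of 1] by simp
  next
    case False
    then show ?thesis using that[of "-1"] \<open>c (x - e) \<noteq> c (x + e)\<close> by simp
  qed
  have "strict_mono_on {x - e..x + e} (\<lambda>z. s * c z)"
    using \<open>x - e < x + e\<close> s inj_onD[OF inj]
    by (intro continuous_inj_imp_strict_mono_on continuous_on_mult_left cont inj_onI) auto
  then have "strict_mono_on {x - e<..<x + e} (\<lambda>z. s * c z)"
    by (rule monotone_on_subset) auto
  moreover have "atlas_local_diffeo {x - e<..<x + e} (\<lambda>z. s * c z + 0)"
    by (rule atlas_local_diffeo_compose[OF atlas_local_diffeo_subset[OF atlas_local_diffeo_chart[OF Wc(1)]]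
          Ck_local_diffeo_affine[OF open_UNIV s(1)]]) (use sub in auto)
  ultimately show ?thesis using e(1) by (auto simp: increasing_coordinate_def)
qed

lemma atlas_local_diffeo_transition:
  assumes \<phi>: "atlas_local_diffeo S \<phi>" and \<psi>: "atlas_local_diffeo S \<psi>" and inj: "inj_on \<psi> S"
  shows "Ck_local_diffeo k (\<psi> ` S) (\<lambda>y. \<phi> (inv_into S \<psi> y))"
proof (rule Ck_local_diffeo_local)
  have "open S" using \<psi> by (simp add: atlas_local_diffeo_def)
  then show "open (\<psi> ` S)"
    using invariance_of_domain[OF atlas_local_diffeo_continuous[OF \<psi>] _ inj] by blast
  fix y assume "y \<in> \<psi> ` S"
  then obtain x where x: "x \<in> S" "y = \<psi> x" by blast
  obtain W c where Wc: "(W, c) \<in> A" "x \<in> W" using chart_covers by blast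
  define N where "N = c ` (S \<inter> W)"
  define g where "g z = \<psi> (inv_into W c z)" for z
  have inv_c: "inv_into W c (c w) = w" if "w \<in> W" for w
    using inv_into_f_f[OF chart_inj[OF Wc(1)] that] .
  have g: "Ck_local_diffeo k N g"
    unfolding N_def g_def[abs_def] by (rule atlas_local_diffeoD[OF \<psi> Wc(1)])
  have g_inj: "inj_on g N"
    using inj inv_c by (auto simp: N_def g_def inj_on_def)
  have gN: "g ` N = \<psi> ` (S \<inter> W)"
    using inv_c by (force simp: N_def g_def image_iff)
  have inv_g: "inv_into N g (\<psi> w) = c w" if "w \<in> S \<inter> W" for w
  proof -
    have "g (c w) = \<psi> w" using that inv_c by (simp add: g_def)
    then show ?thesis using inv_into_f_f[OF g_inj] that by (force simp: N_def)
  qed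
  have "Ck_local_diffeo k (g ` N) (\<lambda>y. \<phi> (inv_into W c (inv_into N g y)))"
    by (rule Ck_local_diffeo_compose[OF atlas_local_diffeoD[OF \<phi> Wc(1)]
          Ck_local_diffeo_inv_into[OF g g_inj]]) (auto simp: N_def[symmetric] inv_into_into)
  then have "Ck_local_diffeo k (\<psi> ` (S \<inter> W)) (\<lambda>y. \<phi> (inv_into W c (inv_into N g y)))"
    by (simp only: gN)
  then have "Ck_local_diffeo k (\<psi> ` (S \<inter> W)) (\<lambda>y. \<phi> (inv_into S \<psi> y))"
  proof (rule Ck_local_diffeo_cong[rotated 2])
    show "open (\<psi> ` (S \<inter> W))"
      using Ck_local_diffeo_inv_into[OF g g_inj] gN by (simp add: Ck_local_diffeo_def)
    fix y assume "y \<in> \<psi> ` (S \<inter> W)"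
    then obtain w where "w \<in> S \<inter> W" "y = \<psi> w" by blast
    then show "\<phi> (inv_into W c (inv_into N g y)) = \<phi> (inv_into S \<psi> y)"
      using inv_g inv_c inv_into_f_f[OF inj] by simp
  qed
  moreover have "y \<in> \<psi> ` (S \<inter> W)" using x Wc by blast
  ultimately show "\<exists>T. open T \<and> y \<in> T \<and> T \<subseteq> \<psi> ` S \<and> Ck_local_diffeo k T (\<lambda>y. \<phi> (inv_into S \<psi> y))"
    by (intro exI[of _ "\<psi> ` (S \<inter> W)"]) (auto simp: Ck_local_diffeo_def)
qed

lemma increasing_coordinate_adjust:
  assumes \<psi>: "increasing_coordinate J \<psi>" and \<phi>: "increasing_coordinate {l<..<r} \<phi>"
    and lr: "{l..r} \<subseteq> J" and q: "l < q1" "q1 \<le> q2" "q2 < r"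
  obtains \<kappa> where "increasing_coordinate J \<kappa>" "\<And>x. x \<in> {q1..q2} \<Longrightarrow> \<kappa> x = \<phi> x"
proof -
  let ?Q = "{l<..<r}"
  have \<psi>_mono: "strict_mono_on J \<psi>" and \<psi>_ld: "atlas_local_diffeo J \<psi>"
    using \<psi> by (auto simp: increasing_coordinate_def)
  have \<psi>_lr: "strict_mono_on {l..r} \<psi>" using monotone_on_subset[OF \<psi>_mono lr] .
  have \<psi>_inj: "inj_on \<psi> ?Q"
    by (rule strict_mono_on_imp_inj_on[OF monotone_on_subset[OF \<psi>_lr]]) auto
  have img: "\<psi> ` ?Q = {\<psi> l<..<\<psi> r}"
    using q atlas_local_diffeo_continuous[OF \<psi>_ld] lr \<psi>_lr
    by (intro strict_mono_on_image_greaterThanLessThan) (auto elim: continuous_on_subset)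
  define t where "t y = \<phi> (inv_into ?Q \<psi> y)" for y
  have t: "Ck_local_diffeo k {\<psi> l<..<\<psi> r} t"
    unfolding t_def img[symmetric] using \<phi> \<psi>_ld lr \<psi>_inj
    by (intro atlas_local_diffeo_transition atlas_local_diffeo_subset[OF \<psi>_ld])
       (auto simp: increasing_coordinate_def)
  have t_\<psi>: "t (\<psi> x) = \<phi> x" if "x \<in> ?Q" for x
    using inv_into_f_f[OF \<psi>_inj that] by (simp add: t_def)
  have \<psi>_less: "\<psi> x < \<psi> x' \<longleftrightarrow> x < x'" and \<psi>_le: "\<psi> x \<le> \<psi> x' \<longleftrightarrow> x \<le> x'"
    if "x \<in> {l..r}" "x' \<in> {l..r}" for x x'
    using strict_mono_on_less[OF \<psi>_lr that] strict_mono_on_less_eq[OF \<psi>_lr that] by simp_all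
  have "strict_mono_on {\<psi> l<..<\<psi> r} t"
  proof (rule strict_mono_onI)
    fix y y' assume "y \<in> {\<psi> l<..<\<psi> r}" "y' \<in> {\<psi> l<..<\<psi> r}" "y < y'"
    then obtain x x' where x: "x \<in> ?Q" "x' \<in> ?Q" "y = \<psi> x" "y' = \<psi> x'" using img by blast
    then have "x < x'" using \<open>y < y'\<close> \<psi>_less[of x x'] by auto
    then have "\<phi> x < \<phi> x'"
      using \<phi> x(1,2) unfolding increasing_coordinate_def by (blast intro: strict_mono_onD)
    then show "t y < t y'" using t_\<psi> x by simp
  qed
  moreover have "\<psi> l < \<psi> q1" "\<psi> q1 \<le> \<psi> q2" "\<psi> q2 < \<psi> r"
    using q \<psi>_less[of l q1] \<psi>_le[of q1 q2] \<psi>_less[of q2 r] by auto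
  ultimately obtain T where T: "Ck_local_diffeo k UNIV T" "strict_mono T"
    "\<And>y. y \<in> {\<psi> q1..\<psi> q2} \<Longrightarrow> T y = t y"
    using increasing_local_diffeo_extension[OF t] by blast
  show ?thesis
  proof
    have "strict_mono_on J (\<lambda>x. T (\<psi> x))"
      using \<psi>_mono T(2) by (simp add: strict_mono_on_def strict_mono_def)
    then show "increasing_coordinate J (\<lambda>x. T (\<psi> x))"
      using atlas_local_diffeo_compose[OF \<psi>_ld T(1)] by (simp add: increasing_coordinate_def)
    fix x assume "x \<in> {q1..q2}"
    moreover from this have "\<psi> x \<in> {\<psi> q1..\<psi> q2}" using q \<psi>_le[of q1 x] \<psi>_le[of x q2] by auto
    ultimately show "T (\<psi> x) = \<phi> x" using T(3) t_\<psi> q by simp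
  qed
qed

lemma increasing_coordinate_glue_right:
  assumes \<phi>: "increasing_coordinate {a<..<b} \<phi>" and \<psi>: "increasing_coordinate {c<..<d} \<psi>"
    and "a < b" "c < b" "b < d" "q < b"
  obtains \<kappa> where "increasing_coordinate {a<..<d} \<kappa>" "\<And>x. x \<in> {a<..q} \<Longrightarrow> \<kappa> x = \<phi> x"
proof -
  define m where "m = max (max a c) q"
  define h where "h = (b - m) / 5"
  have m: "a \<le> m" "c \<le> m" "q \<le> m" "m < b" using assms by (auto simp: m_def)
  then have h: "a \<le> m" "c \<le> m" "q \<le> m" "m + 5 * h = b" "h > 0" by (auto simp: h_def field_simps)
  have "increasing_coordinate {m + h<..<m + 4 * h} \<phi>"
    by (rule increasing_coordinate_subset[OF \<phi>]) (use h in auto)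
  moreover have "{m + h..m + 4 * h} \<subseteq> {c<..<d}" using h assms by auto
  ultimately obtain \<kappa>' where \<kappa>': "increasing_coordinate {c<..<d} \<kappa>'"
    "\<And>x. x \<in> {m + 2 * h..m + 3 * h} \<Longrightarrow> \<kappa>' x = \<phi> x"
    using increasing_coordinate_adjust[OF \<psi>, of "m + h" "m + 4 * h" \<phi> "m + 2 * h" "m + 3 * h"] h
    by auto
  define \<kappa> where "\<kappa> x = (if x \<le> m + 2 * h then \<phi> x else \<kappa>' x)" for x
  have "increasing_coordinate {a<..<m + 3 * h} \<kappa>"
    by (rule increasing_coordinate_cong[OF increasing_coordinate_subset[OF \<phi>]])
       (use h \<kappa>'(2) assms in \<open>auto simp: \<kappa>_def\<close>)
  moreover have "increasing_coordinate {m + 2 * h<..<d} \<kappa>"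
    by (rule increasing_coordinate_cong[OF increasing_coordinate_subset[OF \<kappa>'(1)]])
       (use h assms in \<open>auto simp: \<kappa>_def\<close>)
  ultimately have "increasing_coordinate ({a<..<m + 3 * h} \<union> {m + 2 * h<..<d}) \<kappa>"
    by (rule increasing_coordinate_Un) (use h assms in \<open>auto\<close>)
  moreover have "{a<..<m + 3 * h} \<union> {m + 2 * h<..<d} = {a<..<d}"
    using h assms by auto
  ultimately show ?thesis using that h by (auto simp: \<kappa>_def)
qed

lemma increasing_coordinate_glue_left:
  assumes \<phi>: "increasing_coordinate {a<..<b} \<phi>" and \<psi>: "increasing_coordinate {c<..<d} \<psi>"
    and "a < b" "a < d" "c < a" "a < p"
  obtains \<kappa> where "increasing_coordinate {c<..<b} \<kappa>" "\<And>x. x \<in> {p..<b} \<Longrightarrow> \<kappa> x = \<phi> x"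
proof -
  define m where "m = min (min b d) p"
  define h where "h = (m - a) / 5"
  have m: "m \<le> b" "m \<le> d" "m \<le> p" "a < m" using assms by (auto simp: m_def)
  then have h: "m \<le> b" "m \<le> d" "m \<le> p" "a + 5 * h = m" "h > 0" by (auto simp: h_def field_simps)
  have "increasing_coordinate {a + h<..<a + 4 * h} \<phi>"
    by (rule increasing_coordinate_subset[OF \<phi>]) (use h in auto)
  moreover have "{a + h..a + 4 * h} \<subseteq> {c<..<d}" using h assms by auto
  ultimately obtain \<kappa>' where \<kappa>': "increasing_coordinate {c<..<d} \<kappa>'"
    "\<And>x. x \<in> {a + 2 * h..a + 3 * h} \<Longrightarrow> \<kappa>' x = \<phi> x"
    using increasing_coordinate_adjust[OF \<psi>, of "a + h" "a + 4 * h" \<phi> "a + 2 * h" "a + 3 * h"] h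
    by auto
  define \<kappa> where "\<kappa> x = (if a + 3 * h \<le> x then \<phi> x else \<kappa>' x)" for x
  have "increasing_coordinate {a + 2 * h<..<b} \<kappa>"
    by (rule increasing_coordinate_cong[OF increasing_coordinate_subset[OF \<phi>]])
       (use h \<kappa>'(2) assms in \<open>auto simp: \<kappa>_def\<close>)
  moreover have "increasing_coordinate {c<..<a + 3 * h} \<kappa>"
    by (rule increasing_coordinate_cong[OF increasing_coordinate_subset[OF \<kappa>'(1)]])
       (use h assms in \<open>auto simp: \<kappa>_def\<close>)
  ultimately have "increasing_coordinate ({a + 2 * h<..<b} \<union> {c<..<a + 3 * h}) \<kappa>"
    by (rule increasing_coordinate_Un) (use h assms in \<open>auto\<close>)
  moreover have "{a + 2 * h<..<b} \<union> {c<..<a + 3 * h} = {c<..<b}"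
    using h assms by auto
  ultimately show ?thesis using that h by (auto simp: \<kappa>_def)
qed

lemma increasing_coordinate_extend:
  assumes \<phi>: "increasing_coordinate {a<..<b} \<phi>" and "a < p" "p \<le> q" "q < b"
  shows "\<exists>a' b' \<phi>'. increasing_coordinate {a'<..<b'} \<phi>' \<and> a' < p - r \<and> q + r < b' \<and>
    (\<forall>x\<in>{p..q}. \<phi>' x = \<phi> x)"
    (is "?P r")
proof (rule nonneg_real_induct[where P = ?P])
  show P0: "?P 0" using assms by auto
  show "?P r'" if "?P r" "r' \<le> r" for r r'
  proof -
    obtain a' b' \<phi>' where "increasing_coordinate {a'<..<b'} \<phi>'" "a' < p - r" "q + r < b'"
      "\<forall>x\<in>{p..q}. \<phi>' x = \<phi> x" using \<open>?P r\<close> by blast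
    then show ?thesis using \<open>r' \<le> r\<close> by (intro exI[of _ a'] exI[of _ b'] exI[of _ \<phi>']) auto
  qed
  fix s :: real assume "s \<ge> 0" and below: "\<And>r. r < s \<Longrightarrow> ?P r"
  obtain e1 \<psi>1 where e1: "e1 > 0" "increasing_coordinate {q + s - e1<..<q + s + e1} \<psi>1"
    using increasing_coordinate_near by blast
  obtain e2 \<psi>2 where e2: "e2 > 0" "increasing_coordinate {p - s - e2<..<p - s + e2} \<psi>2"
    using increasing_coordinate_near by blast
  define e where "e = min e1 e2"
  have e: "e > 0" "e \<le> e1" "e \<le> e2" using e1 e2 by (auto simp: e_def)
  have \<psi>1: "increasing_coordinate {q + s - e<..<q + s + e} \<psi>1"
    by (rule increasing_coordinate_subset[OF e1(2)]) (use e in auto)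
  have \<psi>2: "increasing_coordinate {p - s - e<..<p - s + e} \<psi>2"
    by (rule increasing_coordinate_subset[OF e2(2)]) (use e in auto)
  define r0 where "r0 = max 0 (s - e / 2)"
  have r0: "0 \<le> r0" "s - e / 2 \<le> r0" by (auto simp: r0_def)
  have "?P r0"
  proof (cases "s = 0")
    case True
    then show ?thesis using P0 e by (simp add: r0_def)
  next
    case False
    then show ?thesis using below \<open>s \<ge> 0\<close> e by (simp add: r0_def)
  qed
  then obtain a1 b1 \<phi>1 where \<phi>1: "increasing_coordinate {a1<..<b1} \<phi>1" "a1 < p - r0" "q + r0 < b1"
    "\<forall>x\<in>{p..q}. \<phi>1 x = \<phi> x"
    by blast
  obtain b2 \<phi>2 where \<phi>2: "increasing_coordinate {a1<..<b2} \<phi>2" "q + s + e / 2 < b2"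
    "\<forall>x\<in>{p..q}. \<phi>2 x = \<phi> x"
  proof (cases "q + s + e / 2 < b1")
    case False
    have "a1 < b1" "q + s - e < b1" "b1 < q + s + e" "q < b1" using False \<phi>1(2,3) r0 e \<open>p \<le> q\<close> by auto
    then obtain \<kappa> where \<kappa>: "increasing_coordinate {a1<..<q + s + e} \<kappa>"
      "\<And>x. x \<in> {a1<..q} \<Longrightarrow> \<kappa> x = \<phi>1 x"
      by (rule increasing_coordinate_glue_right[OF \<phi>1(1) \<psi>1]) blast
    have "\<forall>x\<in>{p..q}. \<kappa> x = \<phi> x" using \<kappa>(2) \<phi>1(2,4) r0 by auto
    then show ?thesis using that[of "q + s + e" \<kappa>] \<kappa>(1) e by auto
  qed (use that \<phi>1 in blast)
  obtain a3 \<phi>3 where "increasing_coordinate {a3<..<b2} \<phi>3" "a3 < p - s - e / 2"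
    "\<forall>x\<in>{p..q}. \<phi>3 x = \<phi> x"
  proof (cases "a1 < p - s - e / 2")
    case False
    have "a1 < b2" "a1 < p - s + e" "p - s - e < a1" "a1 < p"
      using False \<phi>1(2,3) \<phi>2(2) r0 e \<open>p \<le> q\<close> by auto
    then obtain \<kappa> where \<kappa>: "increasing_coordinate {p - s - e<..<b2} \<kappa>"
      "\<And>x. x \<in> {p..<b2} \<Longrightarrow> \<kappa> x = \<phi>2 x"
      by (rule increasing_coordinate_glue_left[OF \<phi>2(1) \<psi>2]) blast
    have "\<forall>x\<in>{p..q}. \<kappa> x = \<phi> x" using \<kappa>(2) \<phi>2(2,3) e \<open>s \<ge> 0\<close> by auto
    then show ?thesis using that[of "p - s - e" \<kappa>] \<kappa>(1) e by auto
  qed (use that \<phi>2 in blast)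
  then have "?P (s + e / 2)" using \<phi>2(2) by (intro exI[of _ a3] exI[of _ b2] exI[of _ \<phi>3]) auto
  then show "\<exists>r>s. ?P r" using e(1) by (intro exI[of _ "s + e / 2"]) auto
qed

lemma Ck_compatible_if_atlas_local_diffeo:
  assumes f: "atlas_local_diffeo U f" and inj: "inj_on f U" and Wc: "(W, c) \<in> A"
  shows "Ck_compatible k (W, c) (U, f)" "Ck_compatible k (U, f) (W, c)"
proof -
  have inv_c: "inv_into W c (c w) = w" if "w \<in> W" for w
    using inv_into_f_f[OF chart_inj[OF Wc] that] .
  have inv_f: "inv_into U f (f w) = w" if "w \<in> U" for w
    using inv_into_f_f[OF inj that] .
  have "Ck_local_diffeo k (c ` (U \<inter> W)) (f \<circ> inv_into W c)"
    using atlas_local_diffeoD[OF f Wc] by (simp add: o_def)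
  moreover have "inj_on (f \<circ> inv_into W c) (c ` (U \<inter> W))"
  proof (rule inj_onI)
    fix y y' assume "y \<in> c ` (U \<inter> W)" "y' \<in> c ` (U \<inter> W)" "(f \<circ> inv_into W c) y = (f \<circ> inv_into W c) y'"
    then obtain w w' where "w \<in> U \<inter> W" "w' \<in> U \<inter> W" "y = c w" "y' = c w'" "f w = f w'"
      by (auto simp: inv_c)
    then show "y = y'" using inj_onD[OF inj] by auto
  qed
  ultimately have "Ck_diffeo k (c ` (U \<inter> W)) ((f \<circ> inv_into W c) ` c ` (U \<inter> W)) (f \<circ> inv_into W c)"
    by (rule Ck_local_diffeo_imp_Ck_diffeo)
  moreover have "(f \<circ> inv_into W c) ` c ` (U \<inter> W) = f ` (U \<inter> W)"
    unfolding image_comp by (rule image_cong) (simp_all add: inv_c)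
  ultimately show "Ck_compatible k (W, c) (U, f)"
    unfolding Ck_compatible_def by (simp add: Int_commute)
  have "open (U \<inter> W)" using f chart_open[OF Wc] by (auto simp: atlas_local_diffeo_def)
  then have "atlas_local_diffeo (U \<inter> W) c" "atlas_local_diffeo (U \<inter> W) f"
    using atlas_local_diffeo_subset[OF atlas_local_diffeo_chart[OF Wc] _ Int_lower2]
      atlas_local_diffeo_subset[OF f _ Int_lower1] by blast+
  then have tr: "Ck_local_diffeo k (f ` (U \<inter> W)) (\<lambda>y. c (inv_into (U \<inter> W) f y))"
    by (rule atlas_local_diffeo_transition[OF _ _ inj_on_subset[OF inj Int_lower1]])
  have "Ck_local_diffeo k (f ` (U \<inter> W)) (c \<circ> inv_into U f)"
  proof (rule Ck_local_diffeo_cong[OF _ _ tr])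
    show "open (f ` (U \<inter> W))" using tr by (simp add: Ck_local_diffeo_def)
    fix y assume "y \<in> f ` (U \<inter> W)"
    then obtain w where "w \<in> U \<inter> W" "y = f w" by blast
    then show "c (inv_into (U \<inter> W) f y) = (c \<circ> inv_into U f) y"
      using inv_f inv_into_f_f[OF inj_on_subset[OF inj Int_lower1]] by simp
  qed
  moreover have "inj_on (c \<circ> inv_into U f) (f ` (U \<inter> W))"
  proof (rule inj_onI)
    fix y y' assume "y \<in> f ` (U \<inter> W)" "y' \<in> f ` (U \<inter> W)" "(c \<circ> inv_into U f) y = (c \<circ> inv_into U f) y'"
    then obtain w w' where "w \<in> U \<inter> W" "w' \<in> U \<inter> W" "y = f w" "y' = f w'" "c w = c w'"
      by (auto simp: inv_f)
    then show "y = y'" using inj_onD[OF chart_inj[OF Wc]] by auto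
  qed
  ultimately have "Ck_diffeo k (f ` (U \<inter> W)) ((c \<circ> inv_into U f) ` f ` (U \<inter> W)) (c \<circ> inv_into U f)"
    by (rule Ck_local_diffeo_imp_Ck_diffeo)
  moreover have "(c \<circ> inv_into U f) ` f ` (U \<inter> W) = c ` (U \<inter> W)"
    unfolding image_comp by (rule image_cong) (simp_all add: inv_f)
  ultimately show "Ck_compatible k (U, f) (W, c)"
    unfolding Ck_compatible_def by simp
qed

lemma Ck_compatible_withI:
  assumes "\<And>b. b \<in> B \<Longrightarrow> is_chart b" "\<And>b b'. b \<in> B \<Longrightarrow> b' \<in> B \<Longrightarrow> Ck_compatible k b b'"
    and "\<And>W c U f. (W, c) \<in> A \<Longrightarrow> (U, f) \<in> B \<Longrightarrow>
      Ck_compatible k (W, c) (U, f) \<and> Ck_compatible k (U, f) (W, c)"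
  shows "Ck_compatible_with k B A"
  unfolding Ck_compatible_with_def Ck_compatible_family_def
  using assms atlas unfolding Ck_atlas_def Ck_compatible_family_def by fast

lemma increasing_coordinate_global: "\<exists>\<omega>. atlas_local_diffeo UNIV \<omega> \<and> strict_mono \<omega>"
proof -
  define Q where "Q n t \<longleftrightarrow> (case t of (a, b, \<phi>) \<Rightarrow>
    increasing_coordinate {a<..<b} \<phi> \<and> a < - (real n + 1) \<and> real n + 1 < b)"
    for n and t :: "real \<times> real \<times> (real \<Rightarrow> real)"
  define R where "R n t t' \<longleftrightarrow> (\<forall>z\<in>{- (real n + 1)..real n + 1}. snd (snd t') z = snd (snd t) z)"
    for n and t t' :: "real \<times> real \<times> (real \<Rightarrow> real)"
  have "\<exists>t. Q 0 t"
  proof -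
    obtain e \<phi> where "e > 0" "increasing_coordinate {0 - e<..<0 + e} \<phi>"
      using increasing_coordinate_near by blast
    then obtain a b \<phi>' where "increasing_coordinate {a<..<b} \<phi>'" "a < 0 - 1" "0 + 1 < b"
      using increasing_coordinate_extend[of "0 - e" "0 + e" \<phi> 0 0 1] by auto
    then show ?thesis by (intro exI[of _ "(a, b, \<phi>')"]) (simp add: Q_def)
  qed
  moreover have "\<exists>t'. Q (Suc n) t' \<and> R n t t'" if "Q n t" for n t
  proof -
    obtain a b \<phi> where t: "t = (a, b, \<phi>)" by (cases t)
    then have "increasing_coordinate {a<..<b} \<phi>" "a < - (real n + 1)" "real n + 1 < b"
      using that by (simp_all add: Q_def)
    then obtain a' b' \<phi>' where "increasing_coordinate {a'<..<b'} \<phi>'" "a' < - (real n + 1) - 1"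
      "real n + 1 + 1 < b'" "\<forall>z\<in>{- (real n + 1)..real n + 1}. \<phi>' z = \<phi> z"
      using increasing_coordinate_extend[of a b \<phi> "- (real n + 1)" "real n + 1" 1] by auto
    then show ?thesis by (intro exI[of _ "(a', b', \<phi>')"]) (simp add: Q_def R_def t algebra_simps)
  qed
  ultimately obtain t where t: "\<And>n. Q n (t n) \<and> R n (t n) (t (Suc n))"
    using dependent_nat_choice[of Q R] by blast
  define \<phi> where "\<phi> n = snd (snd (t n))" for n
  define I where "I n = {- (real n + 1)<..<real n + 1}" for n
  have \<phi>: "increasing_coordinate (I n) (\<phi> n)" for n
    using t[of n] unfolding Q_def I_def \<phi>_def
    by (auto split: prod.splits elim!: increasing_coordinate_subset)
  have agree: "\<phi> m z = \<phi> n z" if "n \<le> m" "z \<in> {- (real n + 1)..real n + 1}" for n m z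
    using that(1)
  proof (induction m rule: dec_induct)
    case (step m)
    then show ?case using t[of m] that(2) by (auto simp: R_def \<phi>_def)
  qed simp
  define N where "N z = nat \<lceil>\<bar>z\<bar>\<rceil>" for z :: real
  define \<omega> where "\<omega> z = \<phi> (N z) z" for z
  have in_I: "z \<in> I (N z)" for z unfolding I_def N_def by auto linarith+
  have \<omega>_eq: "\<omega> z = \<phi> m z" if "z \<in> I m" for m z
  proof (cases "N z \<le> m")
    case True
    then show ?thesis using agree[OF True, of z] in_I[of z] by (auto simp: \<omega>_def I_def)
  next
    case False
    then have "m \<le> N z" by simp
    moreover have "z \<in> {- (real m + 1)..real m + 1}" using that by (auto simp: I_def)
    ultimately show ?thesis using agree by (simp add: \<omega>_def)
  qed
  have "atlas_local_diffeo UNIV \<omega>"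
  proof (rule atlas_local_diffeo_local[OF open_UNIV])
    fix z :: real
    have "atlas_local_diffeo (I (N z)) \<omega>"
      using \<phi>[of "N z"] \<omega>_eq by (auto simp: increasing_coordinate_def intro: atlas_local_diffeo_cong)
    then show "\<exists>T. open T \<and> z \<in> T \<and> T \<subseteq> UNIV \<and> atlas_local_diffeo T \<omega>"
      using in_I[of z] by (auto simp: I_def)
  qed
  moreover have "strict_mono \<omega>"
  proof (rule strict_monoI)
    fix r s :: real assume "r < s"
    define m where "m = max (N r) (N s)"
    have "r \<in> I m" "s \<in> I m" using in_I[of r] in_I[of s] by (auto simp: I_def m_def)
    then show "\<omega> r < \<omega> s"
      using \<phi>[of m] \<open>r < s\<close> \<omega>_eq by (auto simp: increasing_coordinate_def strict_mono_on_def)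
  qed
  ultimately show ?thesis by blast
qed

lemma increasing_coordinate_global_onto: "\<exists>\<Omega>. atlas_local_diffeo UNIV \<Omega> \<and> strict_mono \<Omega> \<and> surj \<Omega>"
proof -
  obtain \<omega> where \<omega>: "atlas_local_diffeo UNIV \<omega>" "strict_mono \<omega>"
    using increasing_coordinate_global by blast
  define w where "w x = arctan (\<omega> x)" for x
  have w: "atlas_local_diffeo UNIV w"
    unfolding w_def by (rule atlas_local_diffeo_compose[OF \<omega>(1) Ck_local_diffeo_arctan]) simp
  have w_mono: "strict_mono w" using \<omega>(2) by (simp add: strict_mono_def w_def arctan_less_iff)
  have "range w \<subseteq> {- (pi / 2)..pi / 2}"
    using arctan_lbound arctan_ubound by (auto simp: w_def less_imp_le)
  then have "bounded (range w)" by (rule bounded_subset[OF compact_imp_bounded[OF compact_Icc]])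
  define L where "L = Inf (range w)"
  define M where "M = Sup (range w)"
  have range_w: "range w = {L<..<M}"
    unfolding L_def M_def
    by (rule range_strict_mono_bounded[OF atlas_local_diffeo_continuous[OF w] w_mono \<open>bounded (range w)\<close>])
  then have "L < M" by (metis empty_iff greaterThanLessThan_empty_iff not_less rangeI)
  text \<open>The affine map sending \<open>]L, M[\<close> onto \<open>]-pi/2, pi/2[\<close>, followed by \<open>tan\<close>.\<close>
  define a where "a = pi / (M - L)"
  define b where "b = - a * L - pi / 2"
  have "a * (M - L) = pi" using \<open>L < M\<close> by (simp add: a_def)
  then have a: "a * M + b = pi / 2" "a * L + b = - (pi / 2)" by (simp_all add: b_def algebra_simps)
  have "a > 0" using \<open>L < M\<close> by (simp add: a_def)
  note a = \<open>a > 0\<close> a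
  have aff_img: "a * y + b \<in> {- (pi / 2)<..<pi / 2} \<longleftrightarrow> y \<in> {L<..<M}" for y
    using a by (auto simp: mult_less_cancel_left_pos) (smt (verit) mult_less_cancel_left_pos)+
  define \<Omega> where "\<Omega> x = tan (a * w x + b)" for x
  have "atlas_local_diffeo UNIV (\<lambda>x. a * w x + b)"
    by (rule atlas_local_diffeo_compose[OF w Ck_local_diffeo_affine[OF open_UNIV]]) (use a in auto)
  then have "atlas_local_diffeo UNIV \<Omega>"
    unfolding \<Omega>_def by (rule atlas_local_diffeo_compose[OF _ Ck_local_diffeo_tan])
       (use aff_img range_w in blast)
  moreover have "strict_mono \<Omega>"
  proof (rule strict_monoI)
    fix r s :: real assume "r < s"
    then have "a * w r + b < a * w s + b" using w_mono a(1) by (simp add: strict_mono_def)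
    moreover have "a * w r + b \<in> {- (pi / 2)<..<pi / 2}" "a * w s + b \<in> {- (pi / 2)<..<pi / 2}"
      using aff_img range_w by blast+
    ultimately show "\<Omega> r < \<Omega> s"
      unfolding \<Omega>_def using tan_monotone'[of "a * w r + b" "a * w s + b"] by auto
  qed
  moreover have "z \<in> range \<Omega>" for z
  proof -
    have "arctan z \<in> {- (pi / 2)<..<pi / 2}" using arctan_range by blast
    then have "(arctan z - b) / a \<in> range w" using aff_img[of "(arctan z - b) / a"] a(1) range_w by simp
    then obtain x where "w x = (arctan z - b) / a" by auto
    then have "\<Omega> x = z" using a(1) by (simp add: \<Omega>_def tan_arctan)
    then show ?thesis by (metis rangeI)
  qed
  ultimately show ?thesis by (metis UNIV_eq_I)
qed

lemma chain_like_atlas_compatible: "\<exists>V. chain_like k V \<and> Ck_compatible_with k (range V) A"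
proof -
  obtain \<Omega> where \<Omega>: "atlas_local_diffeo UNIV \<Omega>" "strict_mono \<Omega>" "surj \<Omega>"
    using increasing_coordinate_global_onto by blast
  define V where "V i = (\<Omega> -` {of_int i<..<of_int i + 2}, \<Omega>)" for i :: int
  have cont: "continuous_on UNIV \<Omega>" by (rule atlas_local_diffeo_continuous[OF \<Omega>(1)])
  have chain: "chain_like k V"
    unfolding V_def by (rule chain_like_preimages[OF cont \<Omega>(2,3)])
  then have "Ck_atlas k (range V)" by (simp add: chain_like_def)
  then have "Ck_compatible_with k (range V) A"
  proof (intro Ck_compatible_withI)
    fix W c U f assume "(W, c) \<in> A" "(U, f) \<in> range V"
    moreover from this have "f = \<Omega>" "open U" by (auto simp: V_def intro: open_vimage[OF _ cont])
    ultimately show "Ck_compatible k (W, c) (U, f) \<and> Ck_compatible k (U, f) (W, c)"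
      using Ck_compatible_if_atlas_local_diffeo[OF atlas_local_diffeo_subset[OF \<Omega>(1)]
          strict_mono_imp_inj_on[OF monotone_on_subset[OF \<Omega>(2)]]]
      by blast
  qed (auto simp: Ck_atlas_def Ck_compatible_family_def)
  with chain show ?thesis by blast
qed

lemma global_chart_atlas_compatible:
  "\<exists>\<omega>. (\<exists>\<omega>'. homeomorphism UNIV UNIV \<omega> \<omega>') \<and> Ck_compatible_with k {(UNIV, \<omega>)} A"
proof -
  obtain \<Omega> where \<Omega>: "atlas_local_diffeo UNIV \<Omega>" "strict_mono \<Omega>" "surj \<Omega>"
    using increasing_coordinate_global_onto by blast
  have cont: "continuous_on UNIV \<Omega>" by (rule atlas_local_diffeo_continuous[OF \<Omega>(1)])
  have inj: "inj \<Omega>" by (rule strict_mono_imp_inj_on[OF \<Omega>(2)])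
  have hom: "homeomorphism UNIV UNIV \<Omega> (inv \<Omega>)"
    by (rule homeomorphism_strict_mono_surj[OF cont \<Omega>(2,3)])
  have "Ck_compatible_with k {(UNIV, \<Omega>)} A"
  proof (rule Ck_compatible_withI)
    show "is_chart b" if "b \<in> {(UNIV, \<Omega>)}" for b
      using that hom \<Omega>(3) by (auto simp: is_chart_def)
    show "Ck_compatible k b b'" if "b \<in> {(UNIV, \<Omega>)}" "b' \<in> {(UNIV, \<Omega>)}" for b b'
      using that Ck_compatible_same_map[OF inj cont open_UNIV open_UNIV] by simp
    show "Ck_compatible k (W, c) (U, f) \<and> Ck_compatible k (U, f) (W, c)"
      if "(W, c) \<in> A" "(U, f) \<in> {(UNIV, \<Omega>)}" for W c U f
      using that Ck_compatible_if_atlas_local_diffeo[OF \<Omega>(1) inj] by blast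
  qed
  then show ?thesis using hom by blast
qed

end

theorem theorem4p5:
  fixes k :: enat
  assumes "k \<ge> 1"
  shows "(\<forall>\<U>. Ck_atlas k \<U> \<longrightarrow>
            (\<exists>\<V>. chain_like k \<V> \<and> Ck_compatible_with k (range \<V>) \<U>))
       \<and> (\<forall>\<V>. chain_like k \<V> \<longrightarrow>
            (\<exists>\<omega>. (\<exists>\<omega>'. homeomorphism UNIV UNIV \<omega> \<omega>') \<and>
                  Ck_compatible_with k {(UNIV, \<omega>)} (range \<V>)))"
proof (intro conjI allI impI)
  fix \<U> assume "Ck_atlas k \<U>"
  then interpret Ck_real_atlas k \<U> using assms by unfold_locales
  show "\<exists>\<V>. chain_like k \<V> \<and> Ck_compatible_with k (range \<V>) \<U>"
    by (rule chain_like_atlas_compatible)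
next
  fix \<V> assume "chain_like k \<V>"
  then have "Ck_atlas k (range \<V>)" by (simp add: chain_like_def)
  then interpret Ck_real_atlas k "range \<V>" using assms by unfold_locales
  show "\<exists>\<omega>. (\<exists>\<omega>'. homeomorphism UNIV UNIV \<omega> \<omega>') \<and> Ck_compatible_with k {(UNIV, \<omega>)} (range \<V>)"
    by (rule global_chart_atlas_compatible)
qed

end
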